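(* Every cocompact Fuchsian group is extraterrestrial.
   Context: A Fuchsian group is a discrete subgroup of $\mathrm{PSL}(2,\mathbb R)$, acting on the hyperbolic plane by Möbius transformations; it is cocompact if the quotient of the hyperbolic plane by this action is compact. A finitely generated group is extraterrestrial if its Cayley graph with respect to some (equivalently any) finite symmetric generating set is extraterrestrial, where a graph $G=(V,E)$ is extraterrestrial if for every $m$ there is $k$ such that for every $r$ there is a triple $(U,F,O)$ of pairwise disjoint finite vertex sets with $U\neq\emptyset$, $|U|\ge m|F|$, a bijection $\mu:U\to O$ with $d_G(u,\mu(u))\le k$, and every path from $U$ to $O$ either contains a vertex of $F$ or has length at least $r$. *)

theory Defs
  imports "HOL-Analysis.Analysis" "HOL-Algebra.Generated_Groups" "HOL-Library.Extended_Nat"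
begin

text \<open>A walk is a nonempty list of vertices, consecutive ones adjacent; its length is
  the number of edges, i.e. length p - 1.\<close>
definition walk :: "'a set \<Rightarrow> ('a \<Rightarrow> 'a \<Rightarrow> bool) \<Rightarrow> 'a list \<Rightarrow> bool" where
  "walk V E p \<longleftrightarrow> p \<noteq> [] \<and> set p \<subseteq> V \<and> (\<forall>i. Suc i < length p \<longrightarrow> E (p ! i) (p ! Suc i))"

text \<open>Graph distance (infinite if no path exists).\<close>
definition gdist :: "'a set \<Rightarrow> ('a \<Rightarrow> 'a \<Rightarrow> bool) \<Rightarrow> 'a \<Rightarrow> 'a \<Rightarrow> enat" where
  "gdist V E u v = (INF p \<in> {p. walk V E p \<and> hd p = u \<and> last p = v}. enat (length p - 1))"

definition extraterrestrial_graph :: "'a set \<Rightarrow> ('a \<Rightarrow> 'a \<Rightarrow> bool) \<Rightarrow> bool" where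
  "extraterrestrial_graph V E \<longleftrightarrow>
    (\<forall>m::nat. \<exists>k::nat. \<forall>r::nat. \<exists>U F Ou (\<mu> :: 'a \<Rightarrow> 'a).
       U \<subseteq> V \<and> F \<subseteq> V \<and> Ou \<subseteq> V \<and> finite U \<and> finite F \<and> finite Ou \<and>
       U \<inter> F = {} \<and> U \<inter> Ou = {} \<and> F \<inter> Ou = {} \<and>
       U \<noteq> {} \<and> card U \<ge> m * card F \<and>
       bij_betw \<mu> U Ou \<and> (\<forall>u\<in>U. gdist V E u (\<mu> u) \<le> enat k) \<and>
       (\<forall>p. walk V E p \<and> hd p \<in> U \<and> last p \<in> Ou \<longrightarrow>
             set p \<inter> F \<noteq> {} \<or> length p - 1 \<ge> r))"

definition cayley_adj :: "('g, 'b) monoid_scheme \<Rightarrow> 'g set \<Rightarrow> 'g \<Rightarrow> 'g \<Rightarrow> bool" where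
  "cayley_adj G S g h \<longleftrightarrow> g \<in> carrier G \<and> h \<in> carrier G \<and>
     (\<exists>s\<in>S. h = g \<otimes>\<^bsub>G\<^esub> s \<or> g = h \<otimes>\<^bsub>G\<^esub> s)"

definition extraterrestrial_group :: "('g, 'b) monoid_scheme \<Rightarrow> bool" where
  "extraterrestrial_group G \<longleftrightarrow>
    (\<exists>S. finite S \<and> S \<subseteq> carrier G \<and> (\<forall>s\<in>S. inv\<^bsub>G\<^esub> s \<in> S) \<and>
         generate G S = carrier G \<and>
         extraterrestrial_graph (carrier G) (cayley_adj G S))"

definition upper_half_plane :: "complex set" where
  "upper_half_plane = {z. Im z > 0}"

text \<open>Moebius transformation of a real 2x2 matrix, as a map on the upper half plane
  (extended by the identity outside it, so that composition is the group law).\<close>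
definition mob :: "real^2^2 \<Rightarrow> complex \<Rightarrow> complex" where
  "mob A z = (if Im z > 0
      then (of_real (A$1$1) * z + of_real (A$1$2)) / (of_real (A$2$1) * z + of_real (A$2$2))
      else z)"

definition PSL2R :: "(complex \<Rightarrow> complex) set" where
  "PSL2R = {mob A | A. det A = 1}"

definition psl_group :: "(complex \<Rightarrow> complex) monoid" where
  "psl_group = \<lparr>carrier = PSL2R, monoid.mult = (\<circ>), one = id\<rparr>"

text \<open>Discreteness in the quotient topology of PSL(2,R) = SL(2,R)/{+-I}.\<close>
definition discrete_in_PSL :: "(complex \<Rightarrow> complex) set \<Rightarrow> bool" where
  "discrete_in_PSL \<Gamma> \<longleftrightarrow>
    (\<forall>A. det A = 1 \<and> mob A \<in> \<Gamma> \<longrightarrow>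
       (\<exists>e>0. \<forall>B. det B = 1 \<and> mob B \<in> \<Gamma> \<and> norm (B - A) < e \<longrightarrow> mob B = mob A))"

definition fuchsian :: "(complex \<Rightarrow> complex) set \<Rightarrow> bool" where
  "fuchsian \<Gamma> \<longleftrightarrow> subgroup \<Gamma> psl_group \<and> discrete_in_PSL \<Gamma>"

definition quotient_topology :: "'a topology \<Rightarrow> ('a \<Rightarrow> 'b) \<Rightarrow> 'b topology" where
  "quotient_topology X f =
     topology (\<lambda>U. U \<subseteq> f ` topspace X \<and> openin X (topspace X \<inter> f -` U))"

lemma istopology_quotient:
  "istopology (\<lambda>U. U \<subseteq> f ` topspace X \<and> openin X (topspace X \<inter> f -` U))"
proof -
  have 1: "openin X (topspace X \<inter> f -` (S \<inter> T))"
    if "openin X (topspace X \<inter> f -` S)" "openin X (topspace X \<inter> f -` T)" for S T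
  proof -
    have "topspace X \<inter> f -` (S \<inter> T) = (topspace X \<inter> f -` S) \<inter> (topspace X \<inter> f -` T)" by auto
    then show ?thesis using that by auto
  qed
  have 2: "openin X (topspace X \<inter> f -` \<Union>K)"
    if "\<forall>S\<in>K. openin X (topspace X \<inter> f -` S)" for K
  proof -
    have "topspace X \<inter> f -` \<Union>K = (\<Union>S\<in>K. topspace X \<inter> f -` S)" by auto
    moreover have "openin X (\<Union>S\<in>K. topspace X \<inter> f -` S)" using that by (intro openin_Union) auto
    ultimately show ?thesis by simp
  qed
  show ?thesis unfolding istopology_def using 1 2 by blast
qed

definition orbit :: "(complex \<Rightarrow> complex) set \<Rightarrow> complex \<Rightarrow> complex set" where
  "orbit \<Gamma> z = (\<lambda>g. g z) ` \<Gamma>"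

definition cocompact :: "(complex \<Rightarrow> complex) set \<Rightarrow> bool" where
  "cocompact \<Gamma> \<longleftrightarrow>
     compact_space (quotient_topology (subtopology euclidean upper_half_plane) (orbit \<Gamma>))"

end

(* The orbit map g \<mapsto> g \<i> relates the Cayley graph of a cocompact Fuchsian group \<Gamma> to the
   hyperbolic plane: the orbit of \<i> is D-dense, the elements moving \<i> by at most 2D + 1 generate
   \<Gamma>, and each edge moves the orbit point by at most 2D + 1.  The extraterrestrial triples come
   from the imaginary axis, which separates the half-plane.  U consists of elements near the points
   with Fermi coordinates (j (2D + 1), offset q) to the right of the axis, for |j| \<le> J and q < M,
   and O of the elements near their mirror images; mirroring moves these points by an amount
   depending on M only.  A walk from U to O crosses the axis in a single step, so it meets the set
   F of elements near the axis segment of heights in [-L, L] unless it is long enough to climb from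
   height about J (2D + 1) to height L.  Since |F| grows linearly in L while |U| = (2J + 1) M,
   choosing J and L linear in r and M proportional to m makes |U| \<ge> m |F|. *)

theory Submission
  imports Defs
begin

definition cosh_hdist :: "complex \<Rightarrow> complex \<Rightarrow> real" where
  "cosh_hdist z w = 1 + (cmod (z - w))\<^sup>2 / (2 * Im z * Im w)"

definition hdist :: "complex \<Rightarrow> complex \<Rightarrow> real" where
  "hdist z w = arcosh (cosh_hdist z w)"

lemma cosh_hdist_ge_1: "Im z > 0 \<Longrightarrow> Im w > 0 \<Longrightarrow> cosh_hdist z w \<ge> 1"
  unfolding cosh_hdist_def by (simp add: zero_le_divide_iff)

lemma cosh_hdist_commute: "cosh_hdist z w = cosh_hdist w z"
  unfolding cosh_hdist_def by (simp add: norm_minus_commute mult.commute mult.left_commute)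

lemma hdist_commute: "hdist z w = hdist w z"
  unfolding hdist_def by (simp add: cosh_hdist_commute)

lemma hdist_self [simp]: "hdist z z = 0"
  unfolding hdist_def cosh_hdist_def by simp

lemma hdist_nonneg: "Im z > 0 \<Longrightarrow> Im w > 0 \<Longrightarrow> hdist z w \<ge> 0"
  unfolding hdist_def using cosh_hdist_ge_1 by simp

lemma cosh_hdist: "Im z > 0 \<Longrightarrow> Im w > 0 \<Longrightarrow> cosh (hdist z w) = cosh_hdist z w"
  unfolding hdist_def using cosh_hdist_ge_1 by simp

lemma hdist_le_iff:
  "Im z > 0 \<Longrightarrow> Im w > 0 \<Longrightarrow> R \<ge> 0 \<Longrightarrow> hdist z w \<le> R \<longleftrightarrow> cosh_hdist z w \<le> cosh R"
  by (metis cosh_hdist cosh_real_nonneg_le_iff hdist_nonneg)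

lemma hdist_less_iff:
  "Im z > 0 \<Longrightarrow> Im w > 0 \<Longrightarrow> R \<ge> 0 \<Longrightarrow> hdist z w < R \<longleftrightarrow> cosh_hdist z w < cosh R"
  by (metis cosh_hdist cosh_real_nonneg_less_iff hdist_nonneg)

lemma hdist_eq_iff_cosh_hdist:
  assumes "Im z > 0" "Im w > 0" "R \<ge> 0"
  shows "hdist z w = R \<longleftrightarrow> cosh_hdist z w = cosh R"
  by (metis assms cosh_hdist cosh_real_nonneg_le_iff hdist_nonneg order_antisym order_refl)

lemma open_hdist_ball:
  assumes "Im w > 0"
  shows "open {z. Im z > 0 \<and> hdist z w < R}"
proof (cases "R \<ge> 0")
  case True
  have cont: "continuous_on {z. Im z > 0} (\<lambda>z. cosh_hdist z w)"
    unfolding cosh_hdist_def using assms by (intro continuous_intros) auto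
  have "{z. Im z > 0 \<and> hdist z w < R} = {z. Im z > 0} \<inter> (\<lambda>z. cosh_hdist z w) -` {..<cosh R}"
    using hdist_less_iff[OF _ assms True] by auto
  then show ?thesis
    using continuous_open_preimage[OF cont open_halfspace_Im_gt] by simp
next
  case False
  then have "{z. Im z > 0 \<and> hdist z w < R} = {}"
    using hdist_nonneg assms by force
  then show ?thesis by (metis open_empty)
qed

text \<open>The triangle inequality is proved in the hyperboloid model: \<open>cosh_hdist\<close> is the
  Minkowski form of the lifted points, and the Gram determinant of three points of the
  hyperboloid is a square.\<close>

fun minkowski_form :: "real \<times> real \<times> real \<Rightarrow> real \<times> real \<times> real \<Rightarrow> real" where
  "minkowski_form (u0, u1, u2) (v0, v1, v2) = u0 * v0 - u1 * v1 - u2 * v2"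

definition hyperboloid_point :: "complex \<Rightarrow> real \<times> real \<times> real" where
  "hyperboloid_point z =
     (((cmod z)\<^sup>2 + 1) / (2 * Im z), ((cmod z)\<^sup>2 - 1) / (2 * Im z), Re z / Im z)"

lemma cosh_hdist_minkowski:
  assumes "Im z > 0" "Im w > 0"
  shows "cosh_hdist z w = minkowski_form (hyperboloid_point z) (hyperboloid_point w)"
  using assms unfolding cosh_hdist_def hyperboloid_point_def cmod_power2 complex_norm_square
  by (simp add: field_simps power2_eq_square)

lemma minkowski_gram_nonneg:
  "0 \<le> minkowski_form u u * minkowski_form v v * minkowski_form w w
     + 2 * minkowski_form u v * minkowski_form v w * minkowski_form u w
     - minkowski_form u u * (minkowski_form v w)\<^sup>2
     - minkowski_form v v * (minkowski_form u w)\<^sup>2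
     - minkowski_form w w * (minkowski_form u v)\<^sup>2"
proof -
  obtain u0 u1 u2 v0 v1 v2 w0 w1 w2 where "u = (u0, u1, u2)" "v = (v0, v1, v2)" "w = (w0, w1, w2)"
    by (metis prod_cases3)
  moreover have "0 \<le> (u0 * (v1 * w2 - v2 * w1) - u1 * (v0 * w2 - v2 * w0) + u2 * (v0 * w1 - v1 * w0))\<^sup>2"
    by simp
  ultimately show ?thesis
    by (simp add: power2_eq_square algebra_simps)
qed

lemma cosh_hdist_gram:
  assumes "Im x > 0" "Im y > 0" "Im z > 0"
  shows "(cosh_hdist x z - cosh_hdist x y * cosh_hdist y z)\<^sup>2
           \<le> ((cosh_hdist x y)\<^sup>2 - 1) * ((cosh_hdist y z)\<^sup>2 - 1)"
proof -
  have self: "minkowski_form (hyperboloid_point u) (hyperboloid_point u) = 1" if "Im u > 0" for u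
    using cosh_hdist_minkowski[OF that that] by (simp add: cosh_hdist_def)
  show ?thesis
    using minkowski_gram_nonneg[of "hyperboloid_point x" "hyperboloid_point y" "hyperboloid_point z"]
    unfolding cosh_hdist_minkowski[OF assms(1,2)] cosh_hdist_minkowski[OF assms(2,3)]
      cosh_hdist_minkowski[OF assms(1,3)] self[OF assms(1)] self[OF assms(2)] self[OF assms(3)]
    by (simp add: power2_eq_square algebra_simps)
qed

lemma hdist_triangle:
  assumes "Im x > 0" "Im y > 0" "Im z > 0"
  shows "hdist x z \<le> hdist x y + hdist y z"
proof -
  define a b c where "a = cosh_hdist x y" and "b = cosh_hdist y z" and "c = cosh_hdist x z"
  have "a \<ge> 1" "b \<ge> 1"
    using cosh_hdist_ge_1 assms unfolding a_def b_def by auto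
  have "(c - a * b)\<^sup>2 \<le> (a\<^sup>2 - 1) * (b\<^sup>2 - 1)"
    using cosh_hdist_gram[OF assms] unfolding a_def b_def c_def .
  then have "c - a * b \<le> sqrt ((a\<^sup>2 - 1) * (b\<^sup>2 - 1))"
    by (metis real_le_rsqrt abs_le_square_iff abs_ge_self order_trans power2_abs real_sqrt_abs
        real_sqrt_le_iff)
  then have "c \<le> a * b + sqrt (a\<^sup>2 - 1) * sqrt (b\<^sup>2 - 1)"
    by (simp add: real_sqrt_mult)
  also have "\<dots> = cosh (hdist x y + hdist y z)"
    using \<open>a \<ge> 1\<close> \<open>b \<ge> 1\<close> by (simp add: cosh_add hdist_def a_def b_def sinh_arcosh_real)
  finally show ?thesis
    using hdist_le_iff[OF assms(1,3)] hdist_nonneg assms unfolding c_def by simp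
qed

lemma cosh_hdist_opposite_sides_ge:
  assumes "Im z > 0" "Im w > 0" "Re z * Re w \<le> 0"
  shows "cmod z / Im z \<le> cosh_hdist z w"
proof -
  define x y x' y' where "x = Re z" and "y = Im z" and "x' = Re w" and "y' = Im w"
  define r where "r = cmod z"
  have r2: "r\<^sup>2 = x\<^sup>2 + y\<^sup>2"
    unfolding r_def x_def y_def by (simp add: cmod_power2)
  have "y > 0" "y' > 0"
    using assms unfolding y_def y'_def by auto
  have "cosh_hdist z w = 1 + ((x - x')\<^sup>2 + (y - y')\<^sup>2) / (2 * y * y')"
    unfolding cosh_hdist_def x_def y_def x'_def y'_def by (simp add: cmod_power2)
  also have "\<dots> \<ge> 1 + (x\<^sup>2 + (y - y')\<^sup>2) / (2 * y * y')"
  proof -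
    have "(x - x')\<^sup>2 = x\<^sup>2 - 2 * (x * x') + x'\<^sup>2"
      by (simp add: power2_eq_square algebra_simps)
    moreover have "x * x' \<le> 0"
      using assms(3) unfolding x_def x'_def .
    ultimately have "(x - x')\<^sup>2 \<ge> x\<^sup>2"
      using zero_le_power2[of x'] by linarith
    then show ?thesis
      using \<open>y > 0\<close> \<open>y' > 0\<close> by (simp add: divide_right_mono)
  qed
  moreover have "1 + (x\<^sup>2 + (y - y')\<^sup>2) / (2 * y * y') = (r\<^sup>2 + y'\<^sup>2) / (2 * y * y')"
  proof -
    have "1 + (x\<^sup>2 + (y - y')\<^sup>2) / (2 * y * y') = (2 * y * y' + (x\<^sup>2 + (y - y')\<^sup>2)) / (2 * y * y')"
      using \<open>y > 0\<close> \<open>y' > 0\<close> by (simp add: add_divide_distrib)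
    also have "2 * y * y' + (x\<^sup>2 + (y - y')\<^sup>2) = x\<^sup>2 + y\<^sup>2 + y'\<^sup>2"
      by (simp add: power2_eq_square algebra_simps)
    finally show ?thesis
      using r2 by simp
  qed
  moreover have "r / y \<le> (r\<^sup>2 + y'\<^sup>2) / (2 * y * y')"
  proof -
    have "(r\<^sup>2 + y'\<^sup>2) / (2 * y * y') - r / y = (r - y')\<^sup>2 / (2 * y * y')"
      using \<open>y > 0\<close> \<open>y' > 0\<close> by (simp add: field_simps power2_eq_square)
    moreover have "(r - y')\<^sup>2 / (2 * y * y') \<ge> 0"
      using \<open>y > 0\<close> \<open>y' > 0\<close> by simp
    ultimately show ?thesis
      by linarith
  qed
  ultimately show ?thesis
    unfolding r_def y_def by linarith
qed

lemma cosh_hdist_imag_axis: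
  assumes "Im z > 0"
  shows "cosh_hdist z (\<i> * of_real (cmod z)) = cmod z / Im z"
proof -
  define x y r where "x = Re z" and "y = Im z" and "r = cmod z"
  have r2: "r\<^sup>2 = x\<^sup>2 + y\<^sup>2"
    unfolding r_def x_def y_def by (simp add: cmod_power2)
  have "y > 0" "r > 0"
    using assms unfolding y_def r_def by (auto simp: zero_less_norm_iff)
  have "cosh_hdist z (\<i> * of_real r) = 1 + (x\<^sup>2 + (y - r)\<^sup>2) / (2 * y * r)"
    unfolding cosh_hdist_def x_def y_def by (simp add: cmod_power2)
  also have "\<dots> = (2 * y * r + (x\<^sup>2 + (y - r)\<^sup>2)) / (2 * y * r)"
    using \<open>y > 0\<close> \<open>r > 0\<close> by (simp add: add_divide_distrib)
  also have "2 * y * r + (x\<^sup>2 + (y - r)\<^sup>2) = 2 * r\<^sup>2"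
    using r2 by (simp add: power2_eq_square algebra_simps)
  also have "2 * r\<^sup>2 / (2 * y * r) = r / y"
    using \<open>y > 0\<close> \<open>r > 0\<close> by (simp add: power2_eq_square)
  finally show ?thesis
    unfolding r_def y_def .
qed

text \<open>\<open>\<i> * cmod z\<close> is the foot of the perpendicular from \<open>z\<close> to the imaginary axis.\<close>

lemma hdist_imag_axis_le:
  assumes "Im z > 0" "Im w > 0" "Re z * Re w \<le> 0"
  shows "hdist z (\<i> * of_real (cmod z)) \<le> hdist z w"
proof -
  have axis: "Im (\<i> * of_real (cmod z)) > 0"
    using assms(1) by (auto simp: zero_less_norm_iff)
  have "cosh (hdist z (\<i> * of_real (cmod z))) \<le> cosh (hdist z w)"
    using cosh_hdist_opposite_sides_ge[OF assms] cosh_hdist_imag_axis[OF assms(1)]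
    unfolding cosh_hdist[OF assms(1,2)] cosh_hdist[OF assms(1) axis] by simp
  then show ?thesis
    using cosh_real_nonneg_le_iff hdist_nonneg[OF assms(1,2)] hdist_nonneg[OF assms(1) axis] by blast
qed

lemma hdist_opposite_sides_ge:
  assumes "Im z > 0" "Im w > 0" "Re z * Re w \<le> 0" "a \<ge> 0" "cosh a \<le> cmod z / Im z"
  shows "a \<le> hdist z w"
proof -
  have "cosh a \<le> cosh (hdist z w)"
    using cosh_hdist_opposite_sides_ge[OF assms(1-3)] assms(5) unfolding cosh_hdist[OF assms(1,2)]
    by linarith
  then show ?thesis
    using cosh_real_nonneg_le_iff assms(4) hdist_nonneg[OF assms(1,2)] by blast
qed

lemma cosh_hdist_alt:
  "Im z > 0 \<Longrightarrow> Im w > 0 \<Longrightarrow>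
    cosh_hdist z w = ((Re z)\<^sup>2 + (Im z)\<^sup>2 + (Re w)\<^sup>2 + (Im w)\<^sup>2 - 2 * Re z * Re w) / (2 * Im z * Im w)"
  unfolding cosh_hdist_def cmod_power2 by (simp add: field_simps power2_eq_square)

lemma norm_power2_add_mult_Im_le:
  assumes "Im z > 0" "Im w > 0"
  shows "((cmod z)\<^sup>2 + (cmod w)\<^sup>2) * (Im z * Im w)
           \<le> cmod z * cmod w * ((cmod z)\<^sup>2 + (cmod w)\<^sup>2 - 2 * Re z * Re w)"
proof -
  define x y x' y' where "x = Re z" and "y = Im z" and "x' = Re w" and "y' = Im w"
  define r s where "r = cmod z" and "s = cmod w"
  have r2: "r\<^sup>2 = x\<^sup>2 + y\<^sup>2" and s2: "s\<^sup>2 = x'\<^sup>2 + y'\<^sup>2"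
    unfolding r_def s_def x_def y_def x'_def y'_def by (simp_all add: cmod_power2)
  have "y > 0" "y' > 0"
    using assms unfolding y_def y'_def by auto
  have "r > 0" "s > 0"
    using assms unfolding r_def s_def by (auto simp: zero_less_norm_iff)
  have "y\<^sup>2 \<le> r\<^sup>2" "y'\<^sup>2 \<le> s\<^sup>2"
    using r2 s2 by simp_all
  then have "y \<le> r" "y' \<le> s"
    using \<open>r > 0\<close> \<open>s > 0\<close> by (auto simp del: zero_le_power2 intro: power2_le_imp_le less_imp_le)
  then have yy: "y * y' \<le> r * s"
    using \<open>y > 0\<close> \<open>y' > 0\<close> by (simp add: mult_mono)
  have cs: "x * x' + y * y' \<le> r * s"
  proof -
    have "(r * s)\<^sup>2 = (x\<^sup>2 + y\<^sup>2) * (x'\<^sup>2 + y'\<^sup>2)"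
      by (simp add: power_mult_distrib r2 s2)
    moreover have "(x\<^sup>2 + y\<^sup>2) * (x'\<^sup>2 + y'\<^sup>2) - (x * x' + y * y')\<^sup>2 = (x * y' - x' * y)\<^sup>2"
      by (simp add: power2_eq_square algebra_simps)
    ultimately have "(x * x' + y * y')\<^sup>2 \<le> (r * s)\<^sup>2"
      using zero_le_power2[of "x * y' - x' * y"] by linarith
    then have "\<bar>x * x' + y * y'\<bar> \<le> \<bar>r * s\<bar>"
      by (simp only: abs_le_square_iff)
    then show ?thesis
      using \<open>r > 0\<close> \<open>s > 0\<close> by simp
  qed
  have "(r\<^sup>2 + s\<^sup>2) * (y * y') \<le> (r * s) * (r\<^sup>2 + s\<^sup>2 - 2 * x * x')"
  proof (cases "x * x' \<le> 0")
    case True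
    have "(r\<^sup>2 + s\<^sup>2) * (y * y') \<le> (r\<^sup>2 + s\<^sup>2) * (r * s)"
      using yy by (simp add: mult_left_mono)
    moreover have "0 \<le> (r * s) * (-2 * (x * x'))"
      using True \<open>r > 0\<close> \<open>s > 0\<close> by (simp add: mult_nonneg_nonpos)
    ultimately show ?thesis
      by (simp add: algebra_simps)
  next
    case False
    have "2 * r * s \<le> r\<^sup>2 + s\<^sup>2"
      using zero_le_power2[of "r - s"] by (simp add: power2_eq_square algebra_simps)
    then have "2 * r * s * (x * x') \<le> (r\<^sup>2 + s\<^sup>2) * (x * x')"
      using False by (simp add: mult_right_mono)
    moreover have "(r\<^sup>2 + s\<^sup>2) * (x * x') \<le> (r\<^sup>2 + s\<^sup>2) * (r * s - y * y')"
      using cs by (simp add: mult_left_mono)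
    ultimately show ?thesis
      by (simp add: algebra_simps)
  qed
  then show ?thesis
    unfolding r_def s_def x_def y_def x'_def y'_def by (simp add: mult.assoc)
qed

lemma cosh_ln_norm_diff_le:
  assumes "Im z > 0" "Im w > 0"
  shows "cosh (ln (cmod z) - ln (cmod w)) \<le> cosh_hdist z w"
proof -
  define x y x' y' where "x = Re z" and "y = Im z" and "x' = Re w" and "y' = Im w"
  define r s where "r = cmod z" and "s = cmod w"
  have r2: "r\<^sup>2 = x\<^sup>2 + y\<^sup>2" and s2: "s\<^sup>2 = x'\<^sup>2 + y'\<^sup>2"
    unfolding r_def s_def x_def y_def x'_def y'_def by (simp_all add: cmod_power2)
  have "y > 0" "y' > 0"
    using assms unfolding y_def y'_def by auto
  have "r > 0" "s > 0"
    using assms unfolding r_def s_def by (auto simp: zero_less_norm_iff)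
  have key: "(r\<^sup>2 + s\<^sup>2) * (y * y') \<le> (r * s) * (r\<^sup>2 + s\<^sup>2 - 2 * x * x')"
    using norm_power2_add_mult_Im_le[OF assms] unfolding r_def s_def x_def y_def x'_def y'_def
    by (simp add: mult.assoc)
  have "cosh (ln r - ln s) = (r\<^sup>2 + s\<^sup>2) / (2 * r * s)"
  proof -
    have "ln r - ln s = ln (r / s)"
      using \<open>r > 0\<close> \<open>s > 0\<close> by (simp add: ln_div)
    then have "cosh (ln r - ln s) = (r / s + inverse (r / s)) / 2"
      using \<open>r > 0\<close> \<open>s > 0\<close> by (simp add: cosh_ln_real)
    then show ?thesis
      using \<open>r > 0\<close> \<open>s > 0\<close> by (simp add: field_simps power2_eq_square)
  qed
  also have "\<dots> = ((r\<^sup>2 + s\<^sup>2) * (y * y')) / (2 * r * s * (y * y'))"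
    using \<open>y > 0\<close> \<open>y' > 0\<close> by simp
  also have "\<dots> \<le> ((r * s) * (r\<^sup>2 + s\<^sup>2 - 2 * x * x')) / (2 * r * s * (y * y'))"
    using key \<open>r > 0\<close> \<open>s > 0\<close> \<open>y > 0\<close> \<open>y' > 0\<close> by (intro divide_right_mono) auto
  also have "\<dots> = (r\<^sup>2 + s\<^sup>2 - 2 * x * x') / (2 * y * y')"
    using \<open>r > 0\<close> \<open>s > 0\<close> by simp
  also have "\<dots> = cosh_hdist z w"
    unfolding cosh_hdist_alt[OF assms] r2 s2 x_def y_def x'_def y'_def by simp
  finally show ?thesis
    unfolding r_def s_def .
qed

text \<open>\<open>ln (cmod z)\<close> is the arc-length coordinate of the projection of \<open>z\<close> onto the imaginary
  axis.\<close>

lemma abs_ln_norm_diff_le_hdist: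
  "Im z > 0 \<Longrightarrow> Im w > 0 \<Longrightarrow> \<bar>ln (cmod z) - ln (cmod w)\<bar> \<le> hdist z w"
  using cosh_ln_norm_diff_le[of z w] cosh_hdist[of z w] hdist_nonneg[of z w]
  by (metis abs_ge_zero cosh_real_abs cosh_real_nonneg_le_iff)

text \<open>Fermi coordinates along the imaginary axis: \<open>fermi t s\<close> lies at signed distance \<open>s\<close> from
  \<open>\<i> * exp t\<close>, on the geodesic through that point orthogonal to the axis.\<close>

definition fermi :: "real \<Rightarrow> real \<Rightarrow> complex" where
  "fermi t s = Complex (exp t * tanh s) (exp t / cosh s)"

lemma Im_fermi_pos: "Im (fermi t s) > 0"
  unfolding fermi_def by (simp add: cosh_real_pos)

lemma Re_fermi: "Re (fermi t s) = exp t * tanh s"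
  unfolding fermi_def by simp

lemma norm_fermi: "cmod (fermi t s) = exp t"
proof -
  have "(cmod (fermi t s))\<^sup>2 = (exp t)\<^sup>2 * ((sinh s)\<^sup>2 + 1) / (cosh s)\<^sup>2"
    unfolding fermi_def cmod_power2 tanh_def using cosh_real_pos[of s]
    by (simp add: field_simps power2_eq_square)
  also have "\<dots> = (exp t)\<^sup>2"
    using cosh_real_pos[of s] by (simp add: cosh_square_eq[symmetric])
  finally show ?thesis
    by (simp add: power2_eq_iff_nonneg)
qed

lemma norm_div_Im_fermi: "cmod (fermi t s) / Im (fermi t s) = cosh s"
  unfolding norm_fermi using cosh_real_pos[of s] by (simp add: fermi_def)

lemma fermi_zero: "fermi t 0 = \<i> * of_real (exp t)"
  unfolding fermi_def by (simp add: complex_eq_iff)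

lemma hdist_fermi_same_base: "hdist (fermi t s) (fermi t s') = \<bar>s - s'\<bar>"
proof -
  define S C S' C' where "S = sinh s" and "C = cosh s" and "S' = sinh s'" and "C' = cosh s'"
  have "C > 0" "C' > 0"
    unfolding C_def C'_def by (simp_all add: cosh_real_pos)
  have sq: "C\<^sup>2 = S\<^sup>2 + 1" "C'\<^sup>2 = S'\<^sup>2 + 1"
    unfolding S_def C_def S'_def C'_def by (simp_all add: cosh_square_eq)
  have "cosh_hdist (fermi t s) (fermi t s')
      = 1 + ((S / C - S' / C')\<^sup>2 + (1 / C - 1 / C')\<^sup>2) * (C * C') / 2"
    unfolding cosh_hdist_def fermi_def cmod_power2 tanh_def S_def C_def S'_def C'_def
    using \<open>C > 0\<close> \<open>C' > 0\<close> unfolding C_def C'_def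
    by (simp add: field_simps power2_eq_square)
  also have "\<dots> = 1 + ((S * C' - S' * C)\<^sup>2 + (C' - C)\<^sup>2) / (2 * C * C')"
    using \<open>C > 0\<close> \<open>C' > 0\<close> by (simp add: field_simps power2_eq_square)
  also have "(S * C' - S' * C)\<^sup>2 + (C' - C)\<^sup>2
      = (S\<^sup>2 + 1) * C'\<^sup>2 + (S'\<^sup>2 + 1) * C\<^sup>2 - 2 * S * S' * C * C' - 2 * C * C'"
    by (simp add: power2_eq_square algebra_simps)
  also have "\<dots> = 2 * C\<^sup>2 * C'\<^sup>2 - 2 * S * S' * C * C' - 2 * C * C'"
    unfolding sq[symmetric] by (simp add: algebra_simps)
  also have "1 + (2 * C\<^sup>2 * C'\<^sup>2 - 2 * S * S' * C * C' - 2 * C * C') / (2 * C * C') = C * C' - S * S'"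
    using \<open>C > 0\<close> \<open>C' > 0\<close> by (simp add: field_simps power2_eq_square)
  also have "\<dots> = cosh \<bar>s - s'\<bar>"
    unfolding S_def C_def S'_def C'_def cosh_real_abs by (simp add: cosh_diff)
  finally show ?thesis
    using hdist_eq_iff_cosh_hdist[OF Im_fermi_pos Im_fermi_pos] by simp
qed

lemma hdist_fermi_axis: "hdist (fermi t 0) (fermi t' 0) = \<bar>t - t'\<bar>"
proof -
  have "cosh_hdist (fermi t 0) (fermi t' 0) = (exp (t - t') + exp (-(t - t'))) / 2"
    unfolding fermi_zero cosh_hdist_def cmod_power2
    by (simp add: exp_diff exp_minus field_simps power2_eq_square)
  also have "\<dots> = cosh \<bar>t - t'\<bar>"
    unfolding cosh_real_abs by (simp add: cosh_def)
  finally show ?thesis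
    using hdist_eq_iff_cosh_hdist[OF Im_fermi_pos Im_fermi_pos] by simp
qed

definition real_moebius :: "real \<Rightarrow> real \<Rightarrow> real \<Rightarrow> real \<Rightarrow> complex \<Rightarrow> complex" where
  "real_moebius a b c d z = (of_real a * z + of_real b) / (of_real c * z + of_real d)"

lemma real_moebius_denom_nonzero:
  assumes "a * d - b * c = 1" "Im z > 0"
  shows "of_real c * z + of_real d \<noteq> 0"
proof
  assume h: "of_real c * z + of_real d = 0"
  then have "Im (of_real c * z + of_real d) = 0"
    by simp
  then have "c = 0"
    using assms(2) by simp
  moreover have "Re (of_real c * z + of_real d) = 0"
    using h by simp
  ultimately show False
    using assms(1) by simp
qed

lemma Im_real_moebius:
  assumes "a * d - b * c = 1" "Im z > 0"
  shows "Im (real_moebius a b c d z) = Im z / (cmod (of_real c * z + of_real d))\<^sup>2"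
proof -
  have "Im (real_moebius a b c d z)
      = (a * Im z * (c * Re z + d) - (a * Re z + b) * (c * Im z)) / ((c * Re z + d)\<^sup>2 + (c * Im z)\<^sup>2)"
    unfolding real_moebius_def by (simp add: Im_divide power2_eq_square)
  also have "a * Im z * (c * Re z + d) - (a * Re z + b) * (c * Im z) = Im z * (a * d - b * c)"
    by (simp add: algebra_simps)
  finally show ?thesis
    using assms by (simp add: cmod_power2)
qed

lemma Im_real_moebius_pos:
  assumes "a * d - b * c = 1" "Im z > 0"
  shows "Im (real_moebius a b c d z) > 0"
  using Im_real_moebius[OF assms] real_moebius_denom_nonzero[OF assms] assms(2) by simp

lemma real_moebius_diff:
  assumes "a * d - b * c = 1" "Im z > 0" "Im w > 0"
  shows "real_moebius a b c d z - real_moebius a b c d w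
           = (z - w) / ((of_real c * z + of_real d) * (of_real c * w + of_real d))"
proof -
  have "of_real c * z + of_real d \<noteq> 0" "of_real c * w + of_real d \<noteq> 0"
    using real_moebius_denom_nonzero assms by auto
  moreover have "(of_real a * of_real d - of_real b * of_real c :: complex) = 1"
    using assms(1) by (metis of_real_1 of_real_diff of_real_mult)
  ultimately show ?thesis
    unfolding real_moebius_def by (simp add: field_simps)
qed

lemma cosh_hdist_real_moebius:
  assumes "a * d - b * c = 1" "Im z > 0" "Im w > 0"
  shows "cosh_hdist (real_moebius a b c d z) (real_moebius a b c d w) = cosh_hdist z w"
proof -
  define p q where "p = cmod (of_real c * z + of_real d)" and "q = cmod (of_real c * w + of_real d)"
  have "p > 0" "q > 0"
    using real_moebius_denom_nonzero assms unfolding p_def q_def by auto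
  have "(cmod (real_moebius a b c d z - real_moebius a b c d w))\<^sup>2 = (cmod (z - w))\<^sup>2 / (p\<^sup>2 * q\<^sup>2)"
    unfolding real_moebius_diff[OF assms] p_def q_def
    by (simp add: norm_divide norm_mult power_divide power_mult_distrib)
  moreover have "Im (real_moebius a b c d z) = Im z / p\<^sup>2" "Im (real_moebius a b c d w) = Im w / q\<^sup>2"
    using Im_real_moebius assms unfolding p_def q_def by auto
  ultimately show ?thesis
    unfolding cosh_hdist_def using \<open>p > 0\<close> \<open>q > 0\<close> assms by (simp only:) (simp add: field_simps)
qed

lemma real_moebius_real_moebius:
  assumes "a * d - b * c = 1" "e * h - f * g = 1" "Im z > 0"
  shows "real_moebius a b c d (real_moebius e f g h z)
           = real_moebius (a * e + b * g) (a * f + b * h) (c * e + d * g) (c * f + d * h) z"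
proof -
  have nz: "of_real g * z + of_real h \<noteq> 0"
    using real_moebius_denom_nonzero assms by auto
  have frac: "(A * (N / D) + B) / (C * (N / D) + E) = (A * N + B * D) / (C * N + E * D)"
    if "D \<noteq> 0" for A B C E N D :: complex
  proof -
    have "A * (N / D) + B = (A * N + B * D) / D" "C * (N / D) + E = (C * N + E * D) / D"
      using that by (simp_all add: field_simps)
    then show ?thesis
      using that by simp
  qed
  show ?thesis
    unfolding real_moebius_def frac[OF nz] by (simp add: algebra_simps)
qed

lemma cosh_hdist_ii_real_moebius:
  assumes "a * d - b * c = 1"
  shows "cosh_hdist \<i> (real_moebius a b c d \<i>) = (a\<^sup>2 + b\<^sup>2 + c\<^sup>2 + d\<^sup>2) / 2"
proof -
  have nz: "of_real c * \<i> + of_real d \<noteq> 0"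
    using real_moebius_denom_nonzero[OF assms] by simp
  have m: "(cmod (of_real c * \<i> + of_real d))\<^sup>2 = c\<^sup>2 + d\<^sup>2"
    by (simp add: cmod_power2)
  have "c\<^sup>2 + d\<^sup>2 > 0"
    using nz m by (metis zero_less_norm_iff zero_less_power)
  have "real_moebius a b c d \<i> - \<i> = ((of_real b + of_real c) + \<i> * (of_real a - of_real d)) / (of_real c * \<i> + of_real d)"
    unfolding real_moebius_def using nz by (simp add: field_simps)
  then have "cmod (\<i> - real_moebius a b c d \<i>) = cmod ((of_real b + of_real c) + \<i> * (of_real a - of_real d)) / cmod (of_real c * \<i> + of_real d)"
    by (metis norm_minus_commute norm_divide)
  then have "(cmod (\<i> - real_moebius a b c d \<i>))\<^sup>2 = ((b + c)\<^sup>2 + (a - d)\<^sup>2) / (c\<^sup>2 + d\<^sup>2)"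
    using m by (simp add: power_divide cmod_power2)
  moreover have "Im (real_moebius a b c d \<i>) = 1 / (c\<^sup>2 + d\<^sup>2)"
    using Im_real_moebius[OF assms] m by simp
  ultimately have "cosh_hdist \<i> (real_moebius a b c d \<i>) = 1 + ((b + c)\<^sup>2 + (a - d)\<^sup>2) / 2"
    unfolding cosh_hdist_def using \<open>c\<^sup>2 + d\<^sup>2 > 0\<close> by (simp add: field_simps)
  with assms show ?thesis
    by (simp add: power2_eq_square field_simps)
qed

definition mat22 :: "real \<Rightarrow> real \<Rightarrow> real \<Rightarrow> real \<Rightarrow> real^2^2" where
  "mat22 a b c d = vector [vector [a, b], vector [c, d]]"

lemma mat22_nth [simp]:
  "mat22 a b c d $ 1 $ 1 = a" "mat22 a b c d $ 1 $ 2 = b"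
  "mat22 a b c d $ 2 $ 1 = c" "mat22 a b c d $ 2 $ 2 = d"
  unfolding mat22_def by simp_all

lemma mat22_cases:
  obtains a b c d where "A = mat22 a b c d"
proof
  show "A = mat22 (A$1$1) (A$1$2) (A$2$1) (A$2$2)"
    by (simp add: vec_eq_iff forall_2)
qed

lemma det_mat22 [simp]: "det (mat22 a b c d) = a * d - b * c"
  by (simp add: det_2)

lemma mat22_diff: "mat22 a b c d - mat22 a' b' c' d' = mat22 (a - a') (b - b') (c - c') (d - d')"
  by (simp add: vec_eq_iff forall_2)

lemma norm_mat22_le: "norm (mat22 a b c d) \<le> \<bar>a\<bar> + \<bar>b\<bar> + \<bar>c\<bar> + \<bar>d\<bar>"
proof -
  have "norm (mat22 a b c d) \<le> (\<Sum>i\<in>UNIV. norm (mat22 a b c d $ i))"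
    unfolding norm_vec_def by (rule L2_set_le_sum) simp
  also have "\<dots> \<le> (\<bar>a\<bar> + \<bar>b\<bar>) + (\<bar>c\<bar> + \<bar>d\<bar>)"
    using norm_le_l1_cart[of "mat22 a b c d $ 1"] norm_le_l1_cart[of "mat22 a b c d $ 2"]
    by (simp add: sum_2)
  finally show ?thesis by simp
qed

lemma norm_mat22_power2: "(norm (mat22 a b c d))\<^sup>2 = a\<^sup>2 + b\<^sup>2 + c\<^sup>2 + d\<^sup>2"
  by (simp add: norm_vec_def L2_set_def sum_2 sum_nonneg)

lemma abs_mat22_entries_le:
  assumes "norm (mat22 a b c d) \<le> x"
  shows "\<bar>a\<bar> \<le> x" and "\<bar>b\<bar> \<le> x" and "\<bar>c\<bar> \<le> x" and "\<bar>d\<bar> \<le> x"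
proof -
  have "x \<ge> 0"
    using assms norm_ge_zero by (rule order_trans[rotated])
  have sq: "a\<^sup>2 + b\<^sup>2 + c\<^sup>2 + d\<^sup>2 \<le> x\<^sup>2"
    using power_mono[OF assms norm_ge_zero, of 2] by (simp add: norm_mat22_power2)
  have le: "\<bar>t\<bar> \<le> x" if "t\<^sup>2 \<le> x\<^sup>2" for t
    using that \<open>x \<ge> 0\<close> abs_le_square_iff[of t x] by simp
  show "\<bar>a\<bar> \<le> x" "\<bar>b\<bar> \<le> x" "\<bar>c\<bar> \<le> x" "\<bar>d\<bar> \<le> x"
    by (rule le, insert sq zero_le_power2[of a] zero_le_power2[of b] zero_le_power2[of c]
        zero_le_power2[of d], linarith)+
qed

lemma norm_adj_mult_sub_id_le:
  assumes "a * d - b * c = 1" "norm (mat22 a b c d) \<le> \<beta>"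
    and "norm (mat22 (a - a') (b - b') (c - c') (d - d')) \<le> \<eta>"
  shows "norm (mat22 (d * a' - b * c') (d * b' - b * d') (a * c' - c * a') (a * d' - c * b') - mat22 1 0 0 1)
           \<le> 8 * \<beta> * \<eta>"
proof -
  note bounds = abs_mat22_entries_le[OF assms(2)] and diffs = abs_mat22_entries_le[OF assms(3)]
  have small: "\<bar>x * (y' - y) - z * (w' - w)\<bar> \<le> 2 * \<beta> * \<eta>"
    if "\<bar>x\<bar> \<le> \<beta>" "\<bar>z\<bar> \<le> \<beta>" "\<bar>y - y'\<bar> \<le> \<eta>" "\<bar>w - w'\<bar> \<le> \<eta>" for x y y' z w w' :: real
  proof -
    have "\<bar>x * (y' - y)\<bar> \<le> \<beta> * \<eta>" "\<bar>z * (w' - w)\<bar> \<le> \<beta> * \<eta>"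
      using that by (simp_all add: abs_mult mult_mono abs_minus_commute)
    then show ?thesis
      by linarith
  qed
  have eq: "mat22 (d * a' - b * c') (d * b' - b * d') (a * c' - c * a') (a * d' - c * b') - mat22 1 0 0 1
      = mat22 (d * (a' - a) - b * (c' - c)) (d * (b' - b) - b * (d' - d))
          (a * (c' - c) - c * (a' - a)) (a * (d' - d) - c * (b' - b))"
    using assms(1) unfolding mat22_diff by (simp add: algebra_simps)
  show ?thesis
    unfolding eq using norm_mat22_le[of "d * (a' - a) - b * (c' - c)" "d * (b' - b) - b * (d' - d)"
        "a * (c' - c) - c * (a' - a)" "a * (d' - d) - c * (b' - b)"]
      small[OF bounds(4) bounds(2) diffs(1) diffs(3)] small[OF bounds(4) bounds(2) diffs(2) diffs(4)]
      small[OF bounds(1) bounds(3) diffs(3) diffs(1)] small[OF bounds(1) bounds(3) diffs(4) diffs(2)]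
    by linarith
qed

lemma mob_mat22: "mob (mat22 a b c d) z = (if Im z > 0 then real_moebius a b c d z else z)"
  unfolding mob_def real_moebius_def by simp

lemma PSL2R_iff: "g \<in> PSL2R \<longleftrightarrow> (\<exists>a b c d. a * d - b * c = 1 \<and> g = mob (mat22 a b c d))"
proof
  assume "g \<in> PSL2R"
  then obtain A where "det A = 1" "g = mob A"
    unfolding PSL2R_def by blast
  then show "\<exists>a b c d. a * d - b * c = 1 \<and> g = mob (mat22 a b c d)"
    by (cases A rule: mat22_cases) auto
next
  assume "\<exists>a b c d. a * d - b * c = 1 \<and> g = mob (mat22 a b c d)"
  then obtain a b c d where "a * d - b * c = 1" "g = mob (mat22 a b c d)"
    by blast
  then show "g \<in> PSL2R"
    unfolding PSL2R_def by (intro CollectI exI[of _ "mat22 a b c d"]) simp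
qed

lemma Im_mob_pos: "det A = 1 \<Longrightarrow> Im z > 0 \<Longrightarrow> Im (mob A z) > 0"
  by (cases A rule: mat22_cases) (simp add: mob_mat22 Im_real_moebius_pos)

lemma cosh_hdist_mob:
  "det A = 1 \<Longrightarrow> Im z > 0 \<Longrightarrow> Im w > 0 \<Longrightarrow> cosh_hdist (mob A z) (mob A w) = cosh_hdist z w"
  by (cases A rule: mat22_cases) (simp add: mob_mat22 cosh_hdist_real_moebius)

lemma cosh_hdist_ii_mob: "det A = 1 \<Longrightarrow> cosh_hdist \<i> (mob A \<i>) = (norm A)\<^sup>2 / 2"
  by (cases A rule: mat22_cases) (simp add: mob_mat22 cosh_hdist_ii_real_moebius norm_mat22_power2)

lemma mob_mat22_comp:
  assumes "a * d - b * c = 1" "e * h - f * g = 1"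
  shows "mob (mat22 a b c d) \<circ> mob (mat22 e f g h)
           = mob (mat22 (a * e + b * g) (a * f + b * h) (c * e + d * g) (c * f + d * h))"
  using real_moebius_real_moebius[OF assms] Im_real_moebius_pos[OF assms(2)] by (auto simp: mob_mat22)

lemma det_mat22_comp:
  fixes a b c d e f g h :: real
  shows "(a * e + b * g) * (c * f + d * h) - (a * f + b * h) * (c * e + d * g)
     = (a * d - b * c) * (e * h - f * g)"
  by (simp add: algebra_simps)

lemma mob_mat22_id: "mob (mat22 1 0 0 1) = id"
  unfolding mob_mat22 real_moebius_def by auto

lemma mob_mat22_inverse:
  assumes "a * d - b * c = 1"
  shows "mob (mat22 d (-b) (-c) a) \<circ> mob (mat22 a b c d) = id"
    and "mob (mat22 a b c d) \<circ> mob (mat22 d (-b) (-c) a) = id"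
proof -
  have "d * a - (-b) * (-c) = 1"
    using assms by (simp add: algebra_simps)
  with assms show "mob (mat22 d (-b) (-c) a) \<circ> mob (mat22 a b c d) = id"
      "mob (mat22 a b c d) \<circ> mob (mat22 d (-b) (-c) a) = id"
    by (simp_all add: mob_mat22_comp algebra_simps flip: mob_mat22_id)
qed

lemma PSL2R_comp:
  assumes "g \<in> PSL2R" "h \<in> PSL2R"
  shows "g \<circ> h \<in> PSL2R"
proof -
  obtain a b c d where g: "a * d - b * c = 1" "g = mob (mat22 a b c d)"
    using assms(1) unfolding PSL2R_iff by blast
  obtain e f k l where h: "e * l - f * k = 1" "h = mob (mat22 e f k l)"
    using assms(2) unfolding PSL2R_iff by blast
  show ?thesis
    unfolding PSL2R_iff g(2) h(2) mob_mat22_comp[OF g(1) h(1)]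
    using det_mat22_comp[of a e b k c f d l] g(1) h(1) by auto
qed

lemma id_PSL2R: "id \<in> PSL2R"
  unfolding PSL2R_iff mob_mat22_id[symmetric] by (intro exI[of _ 1] exI[of _ 0]) simp

lemma mat22_inverse_PSL2R: "a * d - b * c = 1 \<Longrightarrow> mob (mat22 d (-b) (-c) a) \<in> PSL2R"
  unfolding PSL2R_iff by (intro exI[of _ d] exI[of _ "-b"] exI[of _ "-c"] exI[of _ a])
    (simp add: mult.commute)

lemma group_psl_group: "group psl_group"
proof (rule groupI)
  fix x assume "x \<in> carrier psl_group"
  then obtain a b c d where x: "a * d - b * c = 1" "x = mob (mat22 a b c d)"
    by (auto simp: psl_group_def PSL2R_iff)
  then show "\<exists>y\<in>carrier psl_group. y \<otimes>\<^bsub>psl_group\<^esub> x = \<one>\<^bsub>psl_group\<^esub>"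
    using mob_mat22_inverse(1) mat22_inverse_PSL2R unfolding psl_group_def
    by (intro bexI[of _ "mob (mat22 d (-b) (-c) a)"]) simp_all
qed (auto simp: psl_group_def PSL2R_comp id_PSL2R comp_assoc)

lemma inv_psl_group:
  assumes "a * d - b * c = 1"
  shows "inv\<^bsub>psl_group\<^esub> (mob (mat22 a b c d)) = mob (mat22 d (-b) (-c) a)"
proof -
  interpret group psl_group by (rule group_psl_group)
  have "mob (mat22 a b c d) \<in> PSL2R"
    using assms unfolding PSL2R_iff by blast
  then show ?thesis
    using mob_mat22_inverse[OF assms] mat22_inverse_PSL2R[OF assms]
    by (intro inv_equality) (simp_all add: psl_group_def)
qed

lemma PSL2R_Im_pos: "g \<in> PSL2R \<Longrightarrow> Im z > 0 \<Longrightarrow> Im (g z) > 0"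
  unfolding PSL2R_def using Im_mob_pos by auto

lemma PSL2R_hdist: "g \<in> PSL2R \<Longrightarrow> Im z > 0 \<Longrightarrow> Im w > 0 \<Longrightarrow> hdist (g z) (g w) = hdist z w"
  unfolding PSL2R_def hdist_def using cosh_hdist_mob by auto

lemma finite_image_uniformly_locally_constant:
  fixes T :: "'a::heine_borel set"
  assumes "bounded T" "\<eta> > 0"
    and const: "\<And>x y. x \<in> T \<Longrightarrow> y \<in> T \<Longrightarrow> dist x y < \<eta> \<Longrightarrow> f x = f y"
  shows "finite (f ` T)"
proof -
  have "compact (closure T)"
    using assms(1) by (simp add: compact_closure)
  then obtain K where K: "finite K" "closure T \<subseteq> (\<Union>x\<in>K. ball x (\<eta> / 2))"
    using \<open>\<eta> > 0\<close> unfolding compact_eq_totally_bounded by (meson half_gt_zero)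
  define rep where "rep x = (SOME t. t \<in> T \<and> dist x t < \<eta> / 2)" for x
  have "f ` T \<subseteq> (\<lambda>x. f (rep x)) ` K"
  proof
    fix y assume "y \<in> f ` T"
    then obtain t where t: "t \<in> T" "y = f t"
      by blast
    have "t \<in> (\<Union>x\<in>K. ball x (\<eta> / 2))"
      using K(2) closure_subset t(1) by blast
    then obtain x where x: "x \<in> K" "dist x t < \<eta> / 2"
      by auto
    then have "rep x \<in> T \<and> dist x (rep x) < \<eta> / 2"
      using someI_ex[of "\<lambda>t. t \<in> T \<and> dist x t < \<eta> / 2"] t(1) unfolding rep_def by blast
    moreover have "dist t (rep x) \<le> dist x t + dist x (rep x)"
      using dist_triangle[of t "rep x" x] by (simp add: dist_commute)
    ultimately have "f t = f (rep x)"
      using t(1) x(2) by (intro const) auto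
    then show "y \<in> (\<lambda>x. f (rep x)) ` K"
      using t(2) x(1) by blast
  qed
  then show ?thesis
    using K(1) finite_subset by blast
qed

lemma openin_quotient_topology:
  "openin (quotient_topology X f) U \<longleftrightarrow> U \<subseteq> f ` topspace X \<and> openin X (topspace X \<inter> f -` U)"
  unfolding quotient_topology_def using istopology_quotient[of f X] by (simp add: topology_inverse')

lemma topspace_quotient_topology: "topspace (quotient_topology X f) = f ` topspace X"
proof
  show "topspace (quotient_topology X f) \<subseteq> f ` topspace X"
    using openin_topspace[of "quotient_topology X f"] unfolding openin_quotient_topology by blast
  have "openin (quotient_topology X f) (f ` topspace X)"
    unfolding openin_quotient_topology by (simp add: Int_absorb2 subset_vimage_iff)
  then show "f ` topspace X \<subseteq> topspace (quotient_topology X f)"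
    by (rule openin_subset)
qed

lemma compact_quotient_increasing_cover:
  assumes "compact_space (quotient_topology X f)" "incseq V"
    and "\<And>n. openin X (V n)" "\<And>n. topspace X \<inter> f -` f ` V n = V n"
    and "topspace X \<subseteq> (\<Union>n. V n)"
  obtains n where "topspace X \<subseteq> V n"
proof -
  let ?Q = "quotient_topology X f"
  have "openin ?Q (f ` V n)" for n
    unfolding openin_quotient_topology using assms(3)[of n] assms(4)[of n] openin_subset[OF assms(3)[of n]]
    by (simp add: image_mono)
  moreover have "topspace ?Q \<subseteq> (\<Union>n. f ` V n)"
    unfolding topspace_quotient_topology using assms(5) by blast
  ultimately obtain \<F> where \<F>: "finite \<F>" "\<F> \<subseteq> range (\<lambda>n. f ` V n)" "topspace ?Q \<subseteq> \<Union>\<F>"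
    using assms(1)[unfolded compact_space_alt, rule_format, of "range (\<lambda>n. f ` V n)"] by auto
  then obtain C where C: "finite C" "\<F> = (\<lambda>n. f ` V n) ` C"
    by (meson finite_subset_image)
  have "f ` V m \<subseteq> f ` V (Max (insert 0 C))" if "m \<in> C" for m
    using C(1) that by (intro image_mono monoD[OF assms(2)]) simp
  then have "f ` topspace X \<subseteq> f ` V (Max (insert 0 C))"
    using \<F>(3) C(2) unfolding topspace_quotient_topology by blast
  then have "topspace X \<subseteq> V (Max (insert 0 C))"
    using assms(4) by blast
  then show ?thesis ..
qed

lemma list_sign_change:
  assumes "xs \<noteq> []" "P (hd xs)" "\<not> P (last xs)"
  shows "\<exists>a. Suc a < length xs \<and> P (xs ! a) \<and> \<not> P (xs ! Suc a)"
  using assms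
proof (induction xs)
  case (Cons x xs)
  show ?case
  proof (cases "xs = [] \<or> P (hd xs)")
    case True
    then obtain a where "Suc a < length xs" "P (xs ! a)" "\<not> P (xs ! Suc a)"
      using Cons by (auto split: if_splits)
    then show ?thesis
      by (intro exI[of _ "Suc a"]) simp
  next
    case False
    then show ?thesis
      using Cons.prems(2) by (intro exI[of _ 0]) (auto simp: hd_conv_nth)
  qed
qed simp

lemma walk_Cons_Cons: "walk V E (x # y # p) \<longleftrightarrow> x \<in> V \<and> E x y \<and> walk V E (y # p)"
proof
  assume w: "walk V E (x # y # p)"
  have "E x y"
    using w unfolding walk_def by (metis length_Cons nth_Cons_0 nth_Cons_Suc zero_less_Suc Suc_less_eq)
  moreover have "\<forall>i. Suc i < length (y # p) \<longrightarrow> E ((y # p) ! i) ((y # p) ! Suc i)"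
    using w unfolding walk_def by (metis Suc_less_eq length_Cons nth_Cons_Suc)
  ultimately show "x \<in> V \<and> E x y \<and> walk V E (y # p)"
    using w unfolding walk_def by auto
next
  assume h: "x \<in> V \<and> E x y \<and> walk V E (y # p)"
  show "walk V E (x # y # p)"
    unfolding walk_def
  proof (intro conjI allI impI)
    fix i assume "Suc i < length (x # y # p)"
    with h show "E ((x # y # p) ! i) ((x # y # p) ! Suc i)"
      unfolding walk_def by (cases i) auto
  qed (use h in \<open>auto simp: walk_def\<close>)
qed

lemma walk_append:
  assumes "walk V E p" "walk V E q" "last p = hd q"
  shows "walk V E (p @ tl q)" and "hd (p @ tl q) = hd p" and "last (p @ tl q) = last q"
proof -
  show "hd (p @ tl q) = hd p" "last (p @ tl q) = last q"
    using assms by (cases q; auto simp: walk_def)+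
  show "walk V E (p @ tl q)"
    using assms
proof (induction p rule: induct_list012)
  case (2 x)
  then show ?case
    by (cases q) (auto simp: walk_def)
next
  case (3 x y p)
  then show ?case
    by (simp add: walk_Cons_Cons)
qed (simp add: walk_def)
qed

lemma gdist_le_walk: "walk V E p \<Longrightarrow> gdist V E (hd p) (last p) \<le> enat (length p - 1)"
  unfolding gdist_def by (rule INF_lower) simp

lemma (in group) walk_cayley_step:
  assumes "S \<subseteq> carrier G" "u \<in> carrier G" "s \<in> S"
  shows "walk (carrier G) (cayley_adj G S) [u, u \<otimes> s]"
    and "walk (carrier G) (cayley_adj G S) [u, u \<otimes> inv s]"
proof -
  have s: "s \<in> carrier G"
    using assms by blast
  then have mem: "u \<otimes> s \<in> carrier G" "u \<otimes> inv s \<in> carrier G"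
    and cancel: "u \<otimes> inv s \<otimes> s = u"
    using assms(2) by (simp_all add: m_assoc)
  have "cayley_adj G S u (u \<otimes> s)"
    unfolding cayley_adj_def using assms(2,3) mem(1) by blast
  with mem(1) show "walk (carrier G) (cayley_adj G S) [u, u \<otimes> s]"
    using assms(2) by (simp add: walk_Cons_Cons walk_def)
  have "cayley_adj G S u (u \<otimes> inv s)"
    unfolding cayley_adj_def using assms(2,3) mem(2) by (auto intro!: bexI[of _ s] simp: cancel)
  with mem(2) show "walk (carrier G) (cayley_adj G S) [u, u \<otimes> inv s]"
    using assms(2) by (simp add: walk_Cons_Cons walk_def)
qed

lemma (in group) cayley_walk_to_generated:
  assumes "S \<subseteq> carrier G" "g \<in> generate G S"
  shows "\<exists>n. \<forall>u\<in>carrier G. \<exists>p. walk (carrier G) (cayley_adj G S) p \<and>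
           hd p = u \<and> last p = u \<otimes> g \<and> length p \<le> n + 1"
  using assms(2)
proof (induction g rule: generate.induct)
  case one
  show ?case
  proof (intro exI[of _ 0] ballI)
    fix u assume "u \<in> carrier G"
    then show "\<exists>p. walk (carrier G) (cayley_adj G S) p \<and> hd p = u \<and> last p = u \<otimes> \<one> \<and> length p \<le> 0 + 1"
      by (intro exI[of _ "[u]"]) (simp add: walk_def)
  qed
next
  case (incl s)
  show ?case
  proof (intro exI[of _ 1] ballI)
    fix u assume "u \<in> carrier G"
    then show "\<exists>p. walk (carrier G) (cayley_adj G S) p \<and> hd p = u \<and> last p = u \<otimes> s \<and> length p \<le> 1 + 1"
      using walk_cayley_step(1)[OF assms(1) _ incl] by (intro exI[of _ "[u, u \<otimes> s]"]) simp
  qed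
next
  case (inv s)
  show ?case
  proof (intro exI[of _ 1] ballI)
    fix u assume "u \<in> carrier G"
    then show "\<exists>p. walk (carrier G) (cayley_adj G S) p \<and> hd p = u \<and> last p = u \<otimes> inv s \<and> length p \<le> 1 + 1"
      using walk_cayley_step(2)[OF assms(1) _ inv] by (intro exI[of _ "[u, u \<otimes> inv s]"]) simp
  qed
next
  case (eng g h)
  obtain m where m: "\<forall>u\<in>carrier G. \<exists>p. walk (carrier G) (cayley_adj G S) p \<and>
      hd p = u \<and> last p = u \<otimes> g \<and> length p \<le> m + 1"
    using eng.IH(1) by blast
  obtain n where n: "\<forall>u\<in>carrier G. \<exists>p. walk (carrier G) (cayley_adj G S) p \<and>
      hd p = u \<and> last p = u \<otimes> h \<and> length p \<le> n + 1"
    using eng.IH(2) by blast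
  have gh: "g \<in> carrier G" "h \<in> carrier G"
    using eng.hyps generate_incl[OF assms(1)] by blast+
  show ?case
  proof (intro exI[of _ "m + n"] ballI)
    fix u assume u: "u \<in> carrier G"
    obtain p where p: "walk (carrier G) (cayley_adj G S) p" "hd p = u" "last p = u \<otimes> g"
      "length p \<le> m + 1"
      using m u by blast
    obtain q where q: "walk (carrier G) (cayley_adj G S) q" "hd q = u \<otimes> g"
      "last q = u \<otimes> g \<otimes> h" "length q \<le> n + 1"
      using n u gh by blast
    have pq: "last p = hd q"
      using p(3) q(2) by simp
    have "length (p @ tl q) \<le> m + n + 1"
      using p(4) q(4) by simp
    moreover have "last (p @ tl q) = u \<otimes> (g \<otimes> h)"
      using walk_append(3)[OF p(1) q(1) pq] q(3) u gh by (simp add: m_assoc)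
    ultimately show "\<exists>r. walk (carrier G) (cayley_adj G S) r \<and> hd r = u \<and> last r = u \<otimes> (g \<otimes> h) \<and>
        length r \<le> m + n + 1"
      using walk_append(1,2)[OF p(1) q(1) pq] p(2) by blast
  qed
qed

lemma (in group) cayley_gdist_bounded:
  assumes "S \<subseteq> carrier G" "finite \<Phi>" "\<Phi> \<subseteq> generate G S"
  obtains k where "\<And>u g. u \<in> carrier G \<Longrightarrow> g \<in> \<Phi> \<Longrightarrow>
    gdist (carrier G) (cayley_adj G S) u (u \<otimes> g) \<le> enat k"
proof -
  have "\<forall>g\<in>\<Phi>. \<exists>n. \<forall>u\<in>carrier G. gdist (carrier G) (cayley_adj G S) u (u \<otimes> g) \<le> enat n"
  proof
    fix g assume "g \<in> \<Phi>"
    then have "g \<in> generate G S"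
      using assms(3) by blast
    from cayley_walk_to_generated[OF assms(1) this] obtain n
      where n: "\<forall>u\<in>carrier G. \<exists>p. walk (carrier G) (cayley_adj G S) p \<and>
        hd p = u \<and> last p = u \<otimes> g \<and> length p \<le> n + 1" ..
    have "gdist (carrier G) (cayley_adj G S) u (u \<otimes> g) \<le> enat n" if u: "u \<in> carrier G" for u
    proof -
      obtain p where p: "walk (carrier G) (cayley_adj G S) p" "hd p = u" "last p = u \<otimes> g"
        "length p \<le> n + 1"
        using n u by blast
      then have "gdist (carrier G) (cayley_adj G S) u (u \<otimes> g) \<le> enat (length p - 1)"
        using gdist_le_walk[OF p(1)] by simp
      also have "\<dots> \<le> enat n"
        using p(4) by simp
      finally show ?thesis .
    qed
    then show "\<exists>n. \<forall>u\<in>carrier G. gdist (carrier G) (cayley_adj G S) u (u \<otimes> g) \<le> enat n"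
      by blast
  qed
  from bchoice[OF this] obtain n
    where n: "\<forall>g\<in>\<Phi>. \<forall>u\<in>carrier G. gdist (carrier G) (cayley_adj G S) u (u \<otimes> g) \<le> enat (n g)"
    by blast
  show ?thesis
  proof (rule that)
    fix u g assume "u \<in> carrier G" "g \<in> \<Phi>"
    then have "gdist (carrier G) (cayley_adj G S) u (u \<otimes> g) \<le> enat (n g)"
      using n by blast
    also have "\<dots> \<le> enat (Max (n ` \<Phi>))"
      using assms(2) \<open>g \<in> \<Phi>\<close> by simp
    finally show "gdist (carrier G) (cayley_adj G S) u (u \<otimes> g) \<le> enat (Max (n ` \<Phi>))" .
  qed
qed

locale fuchsian_group =
  fixes \<Gamma> :: "(complex \<Rightarrow> complex) set"
  assumes subgroup: "subgroup \<Gamma> psl_group" and discrete: "discrete_in_PSL \<Gamma>"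
begin

abbreviation G :: "(complex \<Rightarrow> complex) monoid" where
  "G \<equiv> psl_group\<lparr>carrier := \<Gamma>\<rparr>"

lemma group_G: "group G"
  using subgroup.subgroup_is_group[OF subgroup group_psl_group] .

lemma G_simps [simp]: "carrier G = \<Gamma>" "monoid.mult G = (\<circ>)" "one G = id"
  by (simp_all add: psl_group_def)

lemma mem_PSL2R: "g \<in> \<Gamma> \<Longrightarrow> g \<in> PSL2R"
  using subgroup.subset[OF subgroup] by (auto simp: psl_group_def)

lemma id_mem [simp]: "id \<in> \<Gamma>"
  using subgroup.one_closed[OF subgroup] by (simp add: psl_group_def)

lemma comp_mem: "g \<in> \<Gamma> \<Longrightarrow> h \<in> \<Gamma> \<Longrightarrow> g \<circ> h \<in> \<Gamma>"
  using subgroup.m_closed[OF subgroup] by (simp add: psl_group_def)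

lemma inv_mem: "g \<in> \<Gamma> \<Longrightarrow> inv\<^bsub>G\<^esub> g \<in> \<Gamma>"
  using group.inv_closed[OF group_G] by simp

lemma comp_inv: "g \<in> \<Gamma> \<Longrightarrow> g \<circ> inv\<^bsub>G\<^esub> g = id"
  using group.r_inv[OF group_G] by fastforce

lemma apply_inv [simp]: "g \<in> \<Gamma> \<Longrightarrow> g ((inv\<^bsub>G\<^esub> g) z) = z"
  using fun_cong[OF comp_inv] by simp

lemma Im_apply_pos: "g \<in> \<Gamma> \<Longrightarrow> Im z > 0 \<Longrightarrow> Im (g z) > 0"
  using mem_PSL2R PSL2R_Im_pos by blast

lemma Im_apply_ii_pos [simp]: "g \<in> \<Gamma> \<Longrightarrow> Im (g \<i>) > 0"
  using Im_apply_pos by simp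

lemma hdist_apply: "g \<in> \<Gamma> \<Longrightarrow> Im z > 0 \<Longrightarrow> Im w > 0 \<Longrightarrow> hdist (g z) (g w) = hdist z w"
  using mem_PSL2R PSL2R_hdist by blast

lemma hdist_inv_apply:
  assumes "g \<in> \<Gamma>" "Im z > 0" "Im w > 0"
  shows "hdist ((inv\<^bsub>G\<^esub> g) z) w = hdist z (g w)"
proof -
  have "hdist (g ((inv\<^bsub>G\<^esub> g) z)) (g w) = hdist ((inv\<^bsub>G\<^esub> g) z) w"
    using hdist_apply[OF assms(1) Im_apply_pos[OF inv_mem[OF assms(1)] assms(2)] assms(3)] .
  then show ?thesis
    using assms(1) by simp
qed

lemma hdist_ii_inv_comp:
  assumes "g \<in> \<Gamma>" "h \<in> \<Gamma>"
  shows "hdist \<i> ((inv\<^bsub>G\<^esub> g \<circ> h) \<i>) = hdist (g \<i>) (h \<i>)"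
  using hdist_inv_apply[OF assms(1)] assms(2) by (simp add: hdist_commute)

lemma inv_mat22_mem:
  assumes "a * d - b * c = 1" "mob (mat22 a b c d) \<in> \<Gamma>"
  shows "mob (mat22 d (-b) (-c) a) \<in> \<Gamma>"
  using subgroup.m_inv_closed[OF subgroup assms(2)] inv_psl_group[OF assms(1)] by simp

text \<open>Discreteness at the identity is transported to every \<open>A\<close> by multiplying with \<open>adj A\<close>.\<close>

lemma uniformly_discrete:
  assumes "\<beta> \<ge> 0"
  obtains \<eta> where "\<eta> > 0"
    and "\<And>A B. det A = 1 \<Longrightarrow> det B = 1 \<Longrightarrow> mob A \<in> \<Gamma> \<Longrightarrow> mob B \<in> \<Gamma> \<Longrightarrow> norm A \<le> \<beta> \<Longrightarrow>
           dist A B < \<eta> \<Longrightarrow> mob A = mob B"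
proof -
  obtain e where "e > 0" and e: "\<And>B. det B = 1 \<Longrightarrow> mob B \<in> \<Gamma> \<Longrightarrow> norm (B - mat22 1 0 0 1) < e \<Longrightarrow>
      mob B = id"
    using discrete unfolding discrete_in_PSL_def
    by (metis det_mat22 mob_mat22_id id_mem mult_1 mult_zero_left diff_zero)
  define \<eta> where "\<eta> = e / (8 * (\<beta> + 1))"
  have "\<eta> > 0"
    unfolding \<eta>_def using \<open>e > 0\<close> assms by simp
  have "8 * \<beta> * \<eta> < e"
  proof -
    have "8 * \<beta> * \<eta> = e * (\<beta> / (\<beta> + 1))"
      unfolding \<eta>_def using assms by (simp add: field_simps)
    also have "\<dots> < e * 1"
      using \<open>e > 0\<close> assms by (intro mult_strict_left_mono) auto
    finally show ?thesis
      by simp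
  qed
  have "mob A = mob B"
    if "det A = 1" "det B = 1" "mob A \<in> \<Gamma>" "mob B \<in> \<Gamma>" "norm A \<le> \<beta>" "dist A B < \<eta>"
    for A B
  proof -
    note A = that(1,3,5) and B = that(2,4) and close = that(6)
    obtain a b c d where A_eq: "A = mat22 a b c d"
      by (rule mat22_cases)
    obtain a' b' c' d' where B_eq: "B = mat22 a' b' c' d'"
      by (rule mat22_cases)
    have det: "a * d - b * c = 1" "a' * d' - b' * c' = 1"
      using A(1) B(1) unfolding A_eq B_eq by simp_all
    define C where "C = mat22 (d * a' - b * c') (d * b' - b * d') (a * c' - c * a') (a * d' - c * b')"
    have "norm (mat22 a b c d) \<le> \<beta>"
      using A(3) unfolding A_eq .
    moreover have "norm (mat22 (a - a') (b - b') (c - c') (d - d')) \<le> \<eta>"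
      using close unfolding A_eq B_eq dist_norm mat22_diff by simp
    ultimately have "norm (C - mat22 1 0 0 1) \<le> 8 * \<beta> * \<eta>"
      unfolding C_def by (rule norm_adj_mult_sub_id_le[OF det(1)])
    then have C_norm: "norm (C - mat22 1 0 0 1) < e"
      using \<open>8 * \<beta> * \<eta> < e\<close> by linarith
    have "det C = (a * d - b * c) * (a' * d' - b' * c')"
      unfolding C_def det_mat22 by (simp add: algebra_simps)
    then have C_det: "det C = 1"
      using det by simp
    have "d * a - (-b) * (-c) = 1"
      using det(1) by (simp add: algebra_simps)
    from mob_mat22_comp[OF this det(2)] have C_comp: "mob C = mob (mat22 d (-b) (-c) a) \<circ> mob B"
      unfolding C_def B_eq by (simp add: algebra_simps)
    then have "mob C \<in> \<Gamma>"
      using comp_mem inv_mat22_mem det(1) A(2) B(2) unfolding A_eq by simp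
    then have "mob C = id"
      using e C_det C_norm by blast
    then have "mob (mat22 a b c d) \<circ> (mob (mat22 d (-b) (-c) a) \<circ> mob B) = mob (mat22 a b c d)"
      using C_comp by simp
    then show ?thesis
      using mob_mat22_inverse(2)[OF det(1)] unfolding A_eq by (simp flip: comp_assoc)
  qed
  then show ?thesis
    by (rule that[OF \<open>\<eta> > 0\<close>])
qed

lemma finite_hdist_ball: "finite {g \<in> \<Gamma>. hdist \<i> (g \<i>) \<le> R}"
proof -
  define \<beta> where "\<beta> = sqrt (2 * cosh R)"
  obtain \<eta> where "\<eta> > 0" and \<eta>: "\<And>A B. det A = 1 \<Longrightarrow> det B = 1 \<Longrightarrow> mob A \<in> \<Gamma> \<Longrightarrow> mob B \<in> \<Gamma> \<Longrightarrow>
      norm A \<le> \<beta> \<Longrightarrow> dist A B < \<eta> \<Longrightarrow> mob A = mob B"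
    using uniformly_discrete[of \<beta>] unfolding \<beta>_def by auto
  define T where "T = {A. det A = 1 \<and> mob A \<in> \<Gamma> \<and> norm A \<le> \<beta>}"
  have "bounded T"
    unfolding T_def bounded_iff by blast
  moreover have "mob A = mob B" if "A \<in> T" "B \<in> T" "dist A B < \<eta>" for A B
    using that unfolding T_def by (intro \<eta>) auto
  ultimately have "finite (mob ` T)"
    using finite_image_uniformly_locally_constant[where T = T and \<eta> = \<eta> and f = mob] \<open>\<eta> > 0\<close> by blast
  moreover have "{g \<in> \<Gamma>. hdist \<i> (g \<i>) \<le> R} \<subseteq> mob ` T"
  proof
    fix g assume g: "g \<in> {g \<in> \<Gamma>. hdist \<i> (g \<i>) \<le> R}"
    then obtain A where A: "det A = 1" "g = mob A"
      using mem_PSL2R unfolding PSL2R_def by blast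
    have "R \<ge> 0"
      using g hdist_nonneg[of \<i> "g \<i>"] by simp
    then have "(norm A)\<^sup>2 / 2 \<le> cosh R"
      using g hdist_le_iff[of \<i> "g \<i>" R] cosh_hdist_ii_mob[OF A(1)] A(2) by simp
    then have "norm A \<le> \<beta>"
      unfolding \<beta>_def by (simp add: real_le_rsqrt)
    then show "g \<in> mob ` T"
      using A g unfolding T_def by blast
  qed
  ultimately show ?thesis
    by (rule finite_subset[rotated])
qed

end

locale cocompact_fuchsian_group = fuchsian_group +
  assumes cocompact: "cocompact \<Gamma>"
begin

lemma bounded_distance_to_orbit: "\<exists>D::nat. \<forall>z. Im z > 0 \<longrightarrow> (\<exists>g\<in>\<Gamma>. hdist z (g \<i>) < D)"
proof -
  define X where "X = subtopology euclidean upper_half_plane"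
  define V where "V n = {z. Im z > 0 \<and> (\<exists>g\<in>\<Gamma>. hdist z (g \<i>) < real n)}" for n :: nat
  have topX: "topspace X = {z. Im z > 0}"
    unfolding X_def upper_half_plane_def by simp
  have mono: "incseq V"
  proof (rule incseq_SucI, rule subsetI)
    fix n z assume "z \<in> V n"
    then obtain g where "Im z > 0" "g \<in> \<Gamma>" "hdist z (g \<i>) < n"
      unfolding V_def by blast
    then show "z \<in> V (Suc n)"
      unfolding V_def by (auto intro!: bexI[of _ g])
  qed
  have open_V: "openin X (V n)" for n
  proof -
    have "V n = (\<Union>g\<in>\<Gamma>. {z. Im z > 0 \<and> hdist z (g \<i>) < real n})"
      unfolding V_def by blast
    then have "open (V n)"
      by (simp add: open_UN open_hdist_ball)
    then show ?thesis
      unfolding X_def by (rule open_subset[rotated]) (auto simp: V_def upper_half_plane_def)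
  qed
  have saturated: "topspace X \<inter> orbit \<Gamma> -` orbit \<Gamma> ` V n = V n" for n
  proof (intro equalityI subsetI)
    fix z assume "z \<in> topspace X \<inter> orbit \<Gamma> -` orbit \<Gamma> ` V n"
    then obtain w where z: "Im z > 0" and w: "w \<in> V n" "orbit \<Gamma> z = orbit \<Gamma> w"
      unfolding topX by auto
    obtain g where g: "g \<in> \<Gamma>" "Im w > 0" "hdist w (g \<i>) < n"
      using w(1) unfolding V_def by auto
    have "w \<in> orbit \<Gamma> w"
      unfolding orbit_def by (rule image_eqI[of _ _ id]) simp_all
    then have "w \<in> orbit \<Gamma> z"
      using w(2) by simp
    then obtain h where h: "h \<in> \<Gamma>" "w = h z"
      unfolding orbit_def by auto
    have "hdist z ((inv\<^bsub>G\<^esub> h \<circ> g) \<i>) = hdist w (g \<i>)"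
      using hdist_inv_apply[OF h(1), of "g \<i>" z] g(1) z h(2) by (simp add: hdist_commute)
    moreover have "inv\<^bsub>G\<^esub> h \<circ> g \<in> \<Gamma>"
      using comp_mem[OF inv_mem[OF h(1)] g(1)] .
    ultimately show "z \<in> V n"
      unfolding V_def using z g(3) by (intro CollectI conjI bexI[of _ "inv\<^bsub>G\<^esub> h \<circ> g"]) simp_all
  next
    fix z assume "z \<in> V n"
    then show "z \<in> topspace X \<inter> orbit \<Gamma> -` orbit \<Gamma> ` V n"
      unfolding topX V_def by auto
  qed
  have cover: "topspace X \<subseteq> (\<Union>n. V n)"
  proof
    fix z assume z: "z \<in> topspace X"
    define n where "n = nat \<lceil>hdist z \<i>\<rceil> + 1"
    have "hdist z (id \<i>) < real n"
      unfolding n_def by simp linarith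
    then have "z \<in> V n"
      unfolding V_def using z topX id_mem by blast
    then show "z \<in> (\<Union>n. V n)"
      by blast
  qed
  have "compact_space (quotient_topology X (orbit \<Gamma>))"
    using cocompact unfolding cocompact_def X_def .
  then obtain n where "topspace X \<subseteq> V n"
    by (rule compact_quotient_increasing_cover[OF _ mono open_V saturated cover])
  then show ?thesis
    unfolding topX V_def by blast
qed

definition covering_radius :: nat where
  "covering_radius = (LEAST D. \<forall>z. Im z > 0 \<longrightarrow> (\<exists>g\<in>\<Gamma>. hdist z (g \<i>) < real D))"

lemma covering_radius: "Im z > 0 \<Longrightarrow> \<exists>g\<in>\<Gamma>. hdist z (g \<i>) < covering_radius"
  using LeastI_ex[OF bounded_distance_to_orbit] unfolding covering_radius_def by blast

definition gen_radius :: nat where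
  "gen_radius = 2 * covering_radius + 1"

definition generators :: "(complex \<Rightarrow> complex) set" where
  "generators = {g \<in> \<Gamma>. hdist \<i> (g \<i>) \<le> gen_radius}"

lemma finite_generators: "finite generators"
  unfolding generators_def by (rule finite_hdist_ball)

lemma generators_subset: "generators \<subseteq> \<Gamma>"
  unfolding generators_def by blast

lemma inv_generators: "s \<in> generators \<Longrightarrow> inv\<^bsub>G\<^esub> s \<in> generators"
  using hdist_ii_inv_comp[of s id] inv_mem unfolding generators_def by (auto simp: hdist_commute)

text \<open>Translates of the balls of radius \<open>covering_radius + 1/2\<close> about the orbit of \<open>\<i>\<close> cover the
  connected half-plane, and two of them can only meet if the translating elements differ by a
  generator.\<close>

lemma generate_generators: "generate G generators = \<Gamma>"
proof
  interpret G: group G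
    by (rule group_G)
  show "generate G generators \<subseteq> \<Gamma>"
    using G.generate_incl generators_subset by simp
  define P where "P = generate G generators"
  have P_sub: "P \<subseteq> \<Gamma>"
    using G.generate_incl generators_subset by (simp add: P_def)
  define W where "W g = {z. Im z > 0 \<and> hdist z (g \<i>) < covering_radius + 1 / 2}" for g
  define H :: "complex set" where "H = {z. Im z > 0}"
  define U1 U2 where "U1 = (\<Union>g\<in>P. W g)" and "U2 = (\<Union>g\<in>\<Gamma> - P. W g)"
  have "open (W g)" if "g \<in> \<Gamma>" for g
    unfolding W_def using that by (intro open_hdist_ball) simp
  then have "open U1" "open U2"
    unfolding U1_def U2_def using P_sub by auto
  moreover have "connected H"
    unfolding H_def by (rule convex_connected[OF convex_halfspace_Im_gt])
  moreover have "H \<subseteq> U1 \<union> U2"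
  proof
    fix z assume "z \<in> H"
    then obtain g where "g \<in> \<Gamma>" "hdist z (g \<i>) < covering_radius"
      using covering_radius unfolding H_def by blast
    then have "z \<in> W g"
      using \<open>z \<in> H\<close> unfolding W_def H_def by simp
    then show "z \<in> U1 \<union> U2"
      unfolding U1_def U2_def using \<open>g \<in> \<Gamma>\<close> by (cases "g \<in> P") blast+
  qed
  moreover have "U1 \<inter> U2 \<inter> H = {}"
  proof (rule ccontr)
    assume "U1 \<inter> U2 \<inter> H \<noteq> {}"
    then obtain z g h where gh: "g \<in> P" "h \<in> \<Gamma>" "h \<notin> P" "z \<in> W g" "z \<in> W h"
      unfolding U1_def U2_def by blast
    have "g \<in> \<Gamma>" "Im z > 0"
      using gh(1,4) P_sub unfolding W_def by auto
    have "hdist (g \<i>) (h \<i>) \<le> hdist (g \<i>) z + hdist z (h \<i>)"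
      using hdist_triangle[of "g \<i>" z "h \<i>"] \<open>g \<in> \<Gamma>\<close> \<open>Im z > 0\<close> gh(2) by simp
    also have "\<dots> < gen_radius"
      using gh(4,5) unfolding W_def gen_radius_def by (simp add: hdist_commute)
    finally have "hdist \<i> ((inv\<^bsub>G\<^esub> g \<circ> h) \<i>) \<le> gen_radius"
      using hdist_ii_inv_comp[OF \<open>g \<in> \<Gamma>\<close> gh(2)] by simp
    then have "inv\<^bsub>G\<^esub> g \<circ> h \<in> P"
      unfolding P_def generators_def using comp_mem[OF inv_mem[OF \<open>g \<in> \<Gamma>\<close>] gh(2)]
      by (intro generate.incl) simp
    then have "g \<circ> (inv\<^bsub>G\<^esub> g \<circ> h) \<in> P"
      using generate.eng[of g G generators] gh(1) unfolding P_def by simp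
    then show False
      using gh(3) comp_inv[OF \<open>g \<in> \<Gamma>\<close>] by (simp flip: comp_assoc)
  qed
  ultimately have "U1 \<inter> H = {} \<or> U2 \<inter> H = {}"
    using connectedD[of H U1 U2] by blast
  moreover have "\<i> \<in> U1 \<inter> H"
    using generate.one[of G generators] unfolding U1_def P_def W_def H_def by force
  ultimately have empty: "U2 \<inter> H = {}"
    by blast
  show "\<Gamma> \<subseteq> generate G generators"
  proof
    fix h assume "h \<in> \<Gamma>"
    then have "h \<i> \<in> W h \<inter> H"
      unfolding W_def H_def by simp
    then show "h \<in> generate G generators"
      using empty \<open>h \<in> \<Gamma>\<close> unfolding U2_def P_def by blast
  qed
qed

abbreviation cayley :: "(complex \<Rightarrow> complex) \<Rightarrow> (complex \<Rightarrow> complex) \<Rightarrow> bool" where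
  "cayley \<equiv> cayley_adj G generators"

lemma cayley_hdist_le:
  assumes "cayley g h"
  shows "g \<in> \<Gamma>" and "h \<in> \<Gamma>" and "hdist (g \<i>) (h \<i>) \<le> gen_radius"
proof -
  show g: "g \<in> \<Gamma>" and h: "h \<in> \<Gamma>"
    using assms unfolding cayley_adj_def by auto
  obtain s where s: "s \<in> generators" "h = g \<circ> s \<or> g = h \<circ> s"
    using assms unfolding cayley_adj_def by auto
  then have "s \<in> \<Gamma>" "hdist \<i> (s \<i>) \<le> gen_radius"
    unfolding generators_def by auto
  then show "hdist (g \<i>) (h \<i>) \<le> gen_radius"
    using s(2) hdist_apply[OF g, of \<i> "s \<i>"] hdist_apply[OF h, of \<i> "s \<i>"]
    by (auto simp: hdist_commute)
qed

lemma walk_ln_norm_drift: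
  assumes "walk \<Gamma> cayley p" "b < length p"
  shows "\<bar>ln (cmod ((p ! b) \<i>)) - ln (cmod ((p ! 0) \<i>))\<bar> \<le> real b * gen_radius"
  using assms(2)
proof (induction b)
  case (Suc b)
  have "cayley (p ! b) (p ! Suc b)"
    using assms(1) Suc.prems unfolding walk_def by auto
  note step = cayley_hdist_le[OF this]
  have "\<bar>ln (cmod ((p ! Suc b) \<i>)) - ln (cmod ((p ! b) \<i>))\<bar> \<le> gen_radius"
    using abs_ln_norm_diff_le_hdist[of "(p ! Suc b) \<i>" "(p ! b) \<i>"] step by (simp add: hdist_commute)
  then show ?case
    using Suc by (simp add: algebra_simps)
qed simp

definition axis_neighbourhood :: "nat \<Rightarrow> (complex \<Rightarrow> complex) set" where
  "axis_neighbourhood L = {g \<in> \<Gamma>. \<exists>t. \<bar>t\<bar> \<le> L \<and> hdist (g \<i>) (fermi t 0) \<le> gen_radius}"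

text \<open>A walk from the right half-plane to the left one has to take a step across the imaginary
  axis; the vertex before that step lies close to the axis, and its height \<open>ln (cmod (g \<i>))\<close>
  differs from that of the starting vertex by at most the length of the walk times the step
  size.\<close>

lemma walk_across_imag_axis:
  assumes "walk \<Gamma> cayley p" "Re (hd p \<i>) > 0" "Re (last p \<i>) < 0"
    and "set p \<inter> axis_neighbourhood L = {}"
  shows "L < \<bar>ln (cmod (hd p \<i>))\<bar> + real (length p - 1) * gen_radius"
proof -
  have "p \<noteq> []"
    using assms(1) unfolding walk_def by simp
  then obtain a where "Suc a < length p" "Re ((p ! a) \<i>) > 0" "\<not> Re ((p ! Suc a) \<i>) > 0"
    using list_sign_change[of p "\<lambda>g. Re (g \<i>) > 0"] assms(2,3) by auto
  then have Re_a: "Re ((p ! a) \<i>) > 0" and Pa: "a + 1 < length p \<and> Re ((p ! (a + 1)) \<i>) \<le> 0"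
    by simp_all
  have "a + 1 < length p"
    using Pa by simp
  then have "cayley (p ! a) (p ! (a + 1))"
    using assms(1) unfolding walk_def by auto
  note step = cayley_hdist_le[OF this]
  define z where "z = (p ! a) \<i>"
  have "Im z > 0"
    unfolding z_def using step(1) by simp
  have "Re z * Re ((p ! (a + 1)) \<i>) \<le> 0"
    using Pa Re_a unfolding z_def by (simp add: mult_nonneg_nonpos)
  then have "hdist z (\<i> * of_real (cmod z)) \<le> hdist z ((p ! (a + 1)) \<i>)"
    using hdist_imag_axis_le[OF \<open>Im z > 0\<close>] step(2) by simp
  also have "\<dots> \<le> gen_radius"
    using step(3) unfolding z_def .
  finally have "hdist z (\<i> * of_real (cmod z)) \<le> gen_radius" .
  moreover have "\<i> * of_real (cmod z) = fermi (ln (cmod z)) 0"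
  proof -
    have "cmod z > 0"
      using \<open>Im z > 0\<close> by (auto simp: zero_less_norm_iff)
    then show ?thesis
      by (simp add: fermi_zero)
  qed
  moreover have "p ! a \<notin> axis_neighbourhood L"
    using assms(4) \<open>a + 1 < length p\<close> by (simp add: disjoint_iff)
  ultimately have "L < \<bar>ln (cmod z)\<bar>"
    using step(1) unfolding axis_neighbourhood_def z_def by force
  moreover have "\<bar>ln (cmod z) - ln (cmod ((p ! 0) \<i>))\<bar> \<le> a * gen_radius"
    unfolding z_def using walk_ln_norm_drift[OF assms(1)] \<open>a + 1 < length p\<close> by simp
  moreover have "real a * gen_radius \<le> real (length p - 1) * gen_radius"
    using \<open>a + 1 < length p\<close> by (intro mult_right_mono) auto
  ultimately show ?thesis
    using hd_conv_nth[OF \<open>p \<noteq> []\<close>] by simp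
qed

definition ball_card :: nat where
  "ball_card = card {g \<in> \<Gamma>. hdist \<i> (g \<i>) \<le> gen_radius + 1 + covering_radius}"

lemma ball_card_pos: "ball_card > 0"
proof -
  have "id \<in> {g \<in> \<Gamma>. hdist \<i> (g \<i>) \<le> gen_radius + 1 + covering_radius}"
    by simp
  then show ?thesis
    unfolding ball_card_def using finite_hdist_ball card_gt_0_iff by blast
qed

lemma card_axis_neighbourhood:
  "finite (axis_neighbourhood L) \<and> card (axis_neighbourhood L) \<le> (2 * L + 1) * ball_card"
proof -
  define N where "N n = {g \<in> \<Gamma>. hdist (g \<i>) (fermi (of_int n) 0) \<le> gen_radius + 1}" for n :: int
  define B where "B = {g \<in> \<Gamma>. hdist \<i> (g \<i>) \<le> gen_radius + 1 + covering_radius}"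
  have sub: "axis_neighbourhood L \<subseteq> (\<Union>n\<in>{-int L..int L}. N n)"
  proof
    fix g assume "g \<in> axis_neighbourhood L"
    then obtain t :: real where g: "g \<in> \<Gamma>" "\<bar>t\<bar> \<le> L" "hdist (g \<i>) (fermi t 0) \<le> gen_radius"
      unfolding axis_neighbourhood_def by auto
    have "\<lfloor>t\<rfloor> \<in> {-int L..int L}"
      using g(2) by (auto simp: le_floor_iff floor_le_iff)
    moreover have "hdist (fermi t 0) (fermi \<lfloor>t\<rfloor> 0) \<le> 1"
      unfolding hdist_fermi_axis by linarith
    then have "hdist (g \<i>) (fermi \<lfloor>t\<rfloor> 0) \<le> gen_radius + 1"
      using hdist_triangle[of "g \<i>" "fermi t 0" "fermi \<lfloor>t\<rfloor> 0"] g(1,3) Im_fermi_pos by simp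
    ultimately show "g \<in> (\<Union>n\<in>{-int L..int L}. N n)"
      using g(1) unfolding N_def by blast
  qed
  have N: "finite (N n) \<and> card (N n) \<le> ball_card" for n
  proof -
    obtain h where h: "h \<in> \<Gamma>" "hdist (fermi n 0) (h \<i>) < covering_radius"
      using covering_radius[OF Im_fermi_pos] by blast
    have "N n \<subseteq> (\<lambda>x. h \<circ> x) ` B"
    proof
      fix g assume "g \<in> N n"
      then have g: "g \<in> \<Gamma>" "hdist (g \<i>) (fermi n 0) \<le> gen_radius + 1"
        unfolding N_def by auto
      have "hdist \<i> ((inv\<^bsub>G\<^esub> h \<circ> g) \<i>) = hdist (h \<i>) (g \<i>)"
        using hdist_ii_inv_comp[OF h(1) g(1)] .
      also have "\<dots> \<le> hdist (h \<i>) (fermi n 0) + hdist (fermi n 0) (g \<i>)"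
        using hdist_triangle Im_fermi_pos h(1) g(1) by simp
      also have "\<dots> \<le> gen_radius + 1 + covering_radius"
        using h(2) g(2) by (simp add: hdist_commute)
      finally have "inv\<^bsub>G\<^esub> h \<circ> g \<in> B"
        unfolding B_def using comp_mem inv_mem h(1) g(1) by simp
      moreover have "h \<circ> (inv\<^bsub>G\<^esub> h \<circ> g) = g"
        using comp_inv[OF h(1)] by (simp flip: comp_assoc)
      ultimately show "g \<in> (\<lambda>x. h \<circ> x) ` B"
        by (metis image_eqI)
    qed
    moreover have "finite B"
      unfolding B_def by (rule finite_hdist_ball)
    ultimately have "finite (N n)" "card (N n) \<le> card ((\<lambda>x. h \<circ> x) ` B)"
      using finite_subset card_mono by blast+
    moreover have "card ((\<lambda>x. h \<circ> x) ` B) \<le> ball_card"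
      using card_image_le[OF \<open>finite B\<close>] unfolding ball_card_def B_def .
    ultimately show ?thesis
      by linarith
  qed
  have fin: "finite (\<Union>n\<in>{-int L..int L}. N n)"
    using N by blast
  have "card (axis_neighbourhood L) \<le> card (\<Union>n\<in>{-int L..int L}. N n)"
    by (rule card_mono[OF fin sub])
  also have "\<dots> \<le> (\<Sum>n\<in>{-int L..int L}. card (N n))"
    by (rule card_UN_le) simp
  also have "\<dots> \<le> card {-int L..int L} * ball_card"
    using sum_bounded_above[of "{-int L..int L}" "\<lambda>n. card (N n)" ball_card] N by simp
  also have "card {-int L..int L} = 2 * L + 1"
    by simp
  finally show ?thesis
    using finite_subset[OF sub fin] by simp
qed

end

context cocompact_fuchsian_group
begin

lemma gen_radius_pos: "gen_radius > 0"
  unfolding gen_radius_def by simp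

text \<open>The sets \<open>U\<close> and \<open>O\<close> of the extraterrestrial triple consist of group elements near the
  points \<open>sample 1 i\<close> and \<open>sample (-1) i\<close>, which lie on either side of the imaginary axis at
  Fermi coordinates \<open>(j * gen_radius, \<plusminus>offset q)\<close> for \<open>i = (j, q)\<close>.\<close>

definition offset :: "nat \<Rightarrow> real" where
  "offset q = covering_radius + gen_radius + 1 + real q * gen_radius"

definition sample :: "real \<Rightarrow> int \<times> nat \<Rightarrow> complex" where
  "sample \<sigma> i = fermi (of_int (fst i) * gen_radius) (\<sigma> * offset (snd i))"

definition nearby :: "complex \<Rightarrow> complex \<Rightarrow> complex" where
  "nearby z = (SOME g. g \<in> \<Gamma> \<and> hdist z (g \<i>) < covering_radius)"

lemma nearby: "Im z > 0 \<Longrightarrow> nearby z \<in> \<Gamma> \<and> hdist z (nearby z \<i>) < covering_radius"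
  using covering_radius[of z] unfolding nearby_def by (metis (mono_tags, lifting) someI_ex)

lemma nearby_sample: "nearby (sample \<sigma> i) \<in> \<Gamma>" "hdist (sample \<sigma> i) (nearby (sample \<sigma> i) \<i>) < covering_radius"
  using nearby[of "sample \<sigma> i"] unfolding sample_def by (simp_all add: Im_fermi_pos)

lemma Im_sample_pos: "Im (sample \<sigma> i) > 0"
  unfolding sample_def by (rule Im_fermi_pos)

lemma offset_ge: "offset q \<ge> covering_radius + gen_radius + 1"
  unfolding offset_def by simp

lemma hdist_sample_ge:
  assumes "i \<noteq> i'" "\<bar>\<sigma>\<bar> = 1"
  shows "gen_radius \<le> hdist (sample \<sigma> i) (sample \<sigma> i')"
proof (cases "fst i = fst i'")
  case True
  then have "snd i \<noteq> snd i'"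
    using assms(1) by (metis prod.expand)
  then have "1 \<le> \<bar>real (snd i) - real (snd i')\<bar>"
    by linarith
  then have "real gen_radius \<le> \<bar>real (snd i) - real (snd i')\<bar> * gen_radius"
    using mult_right_mono[of 1 _ "real gen_radius"] by simp
  also have "\<dots> = \<bar>\<sigma> * offset (snd i) - \<sigma> * offset (snd i')\<bar>"
    using assms(2) unfolding offset_def by (simp add: abs_mult flip: right_diff_distrib left_diff_distrib)
  also have "\<dots> = hdist (sample \<sigma> i) (sample \<sigma> i')"
    using True unfolding sample_def by (simp add: hdist_fermi_same_base)
  finally show ?thesis .
next
  case False
  then have "1 \<le> \<bar>real_of_int (fst i) - of_int (fst i')\<bar>"
    by linarith
  then have "real gen_radius \<le> \<bar>real_of_int (fst i) - of_int (fst i')\<bar> * gen_radius"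
    using mult_right_mono[of 1 _ "real gen_radius"] by simp
  also have "\<dots> = \<bar>ln (cmod (sample \<sigma> i)) - ln (cmod (sample \<sigma> i'))\<bar>"
    unfolding sample_def norm_fermi by (simp add: abs_mult flip: left_diff_distrib)
  also have "\<dots> \<le> hdist (sample \<sigma> i) (sample \<sigma> i')"
    by (rule abs_ln_norm_diff_le_hdist[OF Im_sample_pos Im_sample_pos])
  finally show ?thesis .
qed

lemma inj_nearby_sample:
  assumes "\<bar>\<sigma>\<bar> = 1"
  shows "inj (\<lambda>i. nearby (sample \<sigma> i))"
proof (rule injI, rule ccontr)
  fix i i' assume eq: "nearby (sample \<sigma> i) = nearby (sample \<sigma> i')" and "i \<noteq> i'"
  have "hdist (sample \<sigma> i) (sample \<sigma> i')
      \<le> hdist (sample \<sigma> i) (nearby (sample \<sigma> i) \<i>) + hdist (nearby (sample \<sigma> i) \<i>) (sample \<sigma> i')"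
    using hdist_triangle Im_sample_pos nearby_sample(1) by simp
  also have "\<dots> < 2 * covering_radius"
    using nearby_sample(2)[of \<sigma> i] nearby_sample(2)[of \<sigma> i'] eq by (simp add: hdist_commute)
  finally show False
    using hdist_sample_ge[OF \<open>i \<noteq> i'\<close> assms] unfolding gen_radius_def by simp
qed

lemma hdist_sample_opposite_ge:
  assumes "\<bar>\<sigma>\<bar> = 1" "Im w > 0" "\<sigma> * Re w \<le> 0"
  shows "offset (snd i) \<le> hdist (sample \<sigma> i) w"
proof (rule hdist_opposite_sides_ge[OF Im_sample_pos assms(2)])
  have \<sigma>: "\<sigma> = 1 \<or> \<sigma> = -1"
    using assms(1) by (auto simp: abs_if split: if_splits)
  have "offset (snd i) > 0"
    using offset_ge[of "snd i"] by linarith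
  then show "offset (snd i) \<ge> 0"
    by simp
  have "Re (sample 1 i) > 0" "Re (sample (-1) i) < 0"
    unfolding sample_def Re_fermi using \<open>offset (snd i) > 0\<close> by (simp_all add: tanh_real_pos_iff tanh_real_neg_iff)
  then show "Re (sample \<sigma> i) * Re w \<le> 0"
    using \<sigma> assms(3) by (auto simp: mult_le_0_iff)
  show "cosh (offset (snd i)) \<le> cmod (sample \<sigma> i) / Im (sample \<sigma> i)"
    using \<sigma> unfolding sample_def norm_div_Im_fermi by auto
qed

lemma nearby_sample_side:
  assumes "\<bar>\<sigma>\<bar> = 1"
  shows "\<sigma> * Re (nearby (sample \<sigma> i) \<i>) > 0"
proof (rule ccontr)
  assume "\<not> ?thesis"
  then have "offset (snd i) \<le> hdist (sample \<sigma> i) (nearby (sample \<sigma> i) \<i>)"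
    using hdist_sample_opposite_ge[OF assms] nearby_sample(1) by simp
  then show False
    using nearby_sample(2)[of \<sigma> i] offset_ge[of "snd i"] by linarith
qed

lemma nearby_sample_not_axis_neighbourhood:
  assumes "\<bar>\<sigma>\<bar> = 1"
  shows "nearby (sample \<sigma> i) \<notin> axis_neighbourhood L"
proof
  assume "nearby (sample \<sigma> i) \<in> axis_neighbourhood L"
  then obtain t where t: "hdist (nearby (sample \<sigma> i) \<i>) (fermi t 0) \<le> gen_radius"
    unfolding axis_neighbourhood_def by auto
  have "hdist (sample \<sigma> i) (fermi t 0)
      \<le> hdist (sample \<sigma> i) (nearby (sample \<sigma> i) \<i>) + hdist (nearby (sample \<sigma> i) \<i>) (fermi t 0)"
    using hdist_triangle Im_sample_pos Im_fermi_pos nearby_sample(1) by simp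
  also have "\<dots> < covering_radius + gen_radius"
    using nearby_sample(2)[of \<sigma> i] t by simp
  finally have "hdist (sample \<sigma> i) (fermi t 0) < covering_radius + gen_radius" .
  moreover have "offset (snd i) \<le> hdist (sample \<sigma> i) (fermi t 0)"
    using hdist_sample_opposite_ge[OF assms Im_fermi_pos] by (simp add: Re_fermi)
  ultimately show False
    using offset_ge[of "snd i"] by linarith
qed

lemma abs_ln_norm_nearby_sample:
  "\<bar>ln (cmod (nearby (sample \<sigma> i) \<i>))\<bar> \<le> \<bar>real_of_int (fst i)\<bar> * gen_radius + covering_radius"
proof -
  have "\<bar>ln (cmod (sample \<sigma> i)) - ln (cmod (nearby (sample \<sigma> i) \<i>))\<bar> < covering_radius"
    using abs_ln_norm_diff_le_hdist[OF Im_sample_pos[of \<sigma> i] Im_apply_ii_pos[OF nearby_sample(1)[of \<sigma> i]]]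
      nearby_sample(2)[of \<sigma> i] by linarith
  moreover have "ln (cmod (sample \<sigma> i)) = real_of_int (fst i) * gen_radius"
    unfolding sample_def norm_fermi by simp
  moreover have "\<bar>real_of_int (fst i) * gen_radius\<bar> = \<bar>real_of_int (fst i)\<bar> * gen_radius"
    by (simp add: abs_mult)
  ultimately show ?thesis
    by linarith
qed

lemma hdist_nearby_samples:
  "hdist (nearby (sample 1 i) \<i>) (nearby (sample (-1) i) \<i>) \<le> 2 * covering_radius + 2 * offset (snd i)"
proof -
  let ?P = "sample 1 i" and ?Q = "sample (-1) i"
  let ?a = "nearby ?P \<i>" and ?b = "nearby ?Q \<i>"
  have H: "Im ?a > 0" "Im ?b > 0" "Im ?P > 0" "Im ?Q > 0"
    using nearby_sample(1) Im_sample_pos by simp_all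
  have "hdist ?a ?b \<le> hdist ?a ?P + hdist ?P ?b"
    using hdist_triangle H by simp
  also have "hdist ?P ?b \<le> hdist ?P ?Q + hdist ?Q ?b"
    using hdist_triangle H by simp
  also have "hdist ?P ?Q = 2 * offset (snd i)"
    unfolding sample_def hdist_fermi_same_base using offset_ge[of "snd i"] by simp
  finally show ?thesis
    using nearby_sample(2)[of 1 i] nearby_sample(2)[of "-1" i] by (simp add: hdist_commute)
qed

lemma long_walk_between_samples:
  assumes "walk \<Gamma> cayley p" "hd p = nearby (sample 1 i)" "last p = nearby (sample (-1) i')"
    and "\<bar>fst i\<bar> \<le> J"
    and "set p \<inter> axis_neighbourhood (J * gen_radius + covering_radius + gen_radius * r + 1) = {}"
  shows "r \<le> length p - 1"
proof -
  have "Re (hd p \<i>) > 0" "Re (last p \<i>) < 0"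
    using nearby_sample_side[of 1 i] nearby_sample_side[of "-1" i'] assms(2,3) by simp_all
  then have "real (J * gen_radius + covering_radius + gen_radius * r + 1)
      < \<bar>ln (cmod (hd p \<i>))\<bar> + real (length p - 1) * gen_radius"
    using walk_across_imag_axis[OF assms(1)] assms(5) by blast
  moreover have "\<bar>real_of_int (fst i)\<bar> \<le> real J"
    using assms(4) by (metis of_int_abs of_int_le_iff of_int_of_nat_eq)
  then have "\<bar>real_of_int (fst i)\<bar> * gen_radius \<le> real J * gen_radius"
    by (rule mult_right_mono) simp
  then have "\<bar>ln (cmod (hd p \<i>))\<bar> \<le> real J * gen_radius + covering_radius"
    using abs_ln_norm_nearby_sample[of 1 i] assms(2) by simp
  ultimately have "real r * gen_radius < real (length p - 1) * gen_radius"
    by (simp add: algebra_simps)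
  then show ?thesis
    using gen_radius_pos by (simp add: mult_less_cancel_right)
qed

lemma card_axis_neighbourhood_le:
  assumes "J = covering_radius + gen_radius * r + 3"
  shows "m * card (axis_neighbourhood (J * gen_radius + covering_radius + gen_radius * r + 1))
           \<le> (2 * J + 1) * ((m + 1) * ball_card * (gen_radius + 1))"
proof -
  let ?L = "J * gen_radius + covering_radius + gen_radius * r + 1"
  have "card (axis_neighbourhood ?L) \<le> (2 * ?L + 1) * ball_card"
    using card_axis_neighbourhood by blast
  also have "\<dots> \<le> (2 * J + 1) * (gen_radius + 1) * ball_card"
    unfolding assms by (intro mult_right_mono) (simp_all add: algebra_simps)
  finally have "m * card (axis_neighbourhood ?L) \<le> m * ((2 * J + 1) * (gen_radius + 1) * ball_card)"
    by (rule mult_le_mono2)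
  also have "\<dots> \<le> (2 * J + 1) * ((m + 1) * ball_card * (gen_radius + 1))"
    by (simp add: algebra_simps)
  finally show ?thesis .
qed

lemma gdist_nearby_samples:
  assumes k: "\<And>u g. u \<in> \<Gamma> \<Longrightarrow> g \<in> \<Gamma> \<Longrightarrow> hdist \<i> (g \<i>) \<le> 2 * covering_radius + 2 * offset M \<Longrightarrow>
      gdist \<Gamma> cayley u (u \<circ> g) \<le> enat k"
    and "snd i \<le> M"
  shows "gdist \<Gamma> cayley (nearby (sample 1 i)) (nearby (sample (-1) i)) \<le> enat k"
proof -
  let ?u = "nearby (sample 1 i)" and ?v = "nearby (sample (-1) i)"
  have "?u \<in> \<Gamma>" "?v \<in> \<Gamma>"
    using nearby_sample(1) by auto
  define g where "g = inv\<^bsub>G\<^esub> ?u \<circ> ?v"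
  have "offset (snd i) \<le> offset M"
    using assms(2) unfolding offset_def by (auto intro!: mult_right_mono)
  have "hdist \<i> (g \<i>) = hdist (?u \<i>) (?v \<i>)"
    unfolding g_def by (rule hdist_ii_inv_comp[OF \<open>?u \<in> \<Gamma>\<close> \<open>?v \<in> \<Gamma>\<close>])
  also have "\<dots> \<le> 2 * covering_radius + 2 * offset (snd i)"
    by (rule hdist_nearby_samples)
  also have "\<dots> \<le> 2 * covering_radius + 2 * offset M"
    using \<open>offset (snd i) \<le> offset M\<close> by simp
  finally have "gdist \<Gamma> cayley ?u (?u \<circ> g) \<le> enat k"
    unfolding g_def using k \<open>?u \<in> \<Gamma>\<close> comp_mem[OF inv_mem] \<open>?v \<in> \<Gamma>\<close> by simp
  moreover have "?u \<circ> g = ?v"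
    unfolding g_def using comp_inv[OF \<open>?u \<in> \<Gamma>\<close>] by (simp flip: comp_assoc)
  ultimately show ?thesis
    by simp
qed

lemma extraterrestrial_cayley_graph: "extraterrestrial_graph \<Gamma> cayley"
  unfolding extraterrestrial_graph_def
proof (intro allI)
  fix m :: nat
  define M where "M = (m + 1) * ball_card * (gen_radius + 1)"
  define \<Phi> where "\<Phi> = {g \<in> \<Gamma>. hdist \<i> (g \<i>) \<le> 2 * covering_radius + 2 * offset M}"
  have "finite \<Phi>"
    unfolding \<Phi>_def by (rule finite_hdist_ball)
  moreover have "\<Phi> \<subseteq> generate G generators"
    unfolding generate_generators \<Phi>_def by blast
  moreover have "generators \<subseteq> carrier G"
    using generators_subset by simp
  ultimately obtain k where "\<And>u g. u \<in> carrier G \<Longrightarrow> g \<in> \<Phi> \<Longrightarrow>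
      gdist (carrier G) cayley u (u \<otimes>\<^bsub>G\<^esub> g) \<le> enat k"
    using group.cayley_gdist_bounded[OF group_G] by metis
  then have k: "gdist \<Gamma> cayley u (u \<circ> g) \<le> enat k"
    if "u \<in> \<Gamma>" "g \<in> \<Gamma>" "hdist \<i> (g \<i>) \<le> 2 * covering_radius + 2 * offset M" for u g
    using that unfolding \<Phi>_def by simp
  show "\<exists>k. \<forall>r. \<exists>U F Ou \<mu>. U \<subseteq> \<Gamma> \<and> F \<subseteq> \<Gamma> \<and> Ou \<subseteq> \<Gamma> \<and> finite U \<and> finite F \<and> finite Ou \<and>
      U \<inter> F = {} \<and> U \<inter> Ou = {} \<and> F \<inter> Ou = {} \<and> U \<noteq> {} \<and> m * card F \<le> card U \<and>
      bij_betw \<mu> U Ou \<and> (\<forall>u\<in>U. gdist \<Gamma> cayley u (\<mu> u) \<le> enat k) \<and>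
      (\<forall>p. walk \<Gamma> cayley p \<and> hd p \<in> U \<and> last p \<in> Ou \<longrightarrow> set p \<inter> F \<noteq> {} \<or> r \<le> length p - 1)"
  proof (intro exI[of _ k] allI)
    fix r :: nat
    define J where "J = covering_radius + gen_radius * r + 3"
    define I where "I = {- int J..int J} \<times> {0..<M}"
    define u v where "u i = nearby (sample 1 i)" and "v i = nearby (sample (-1) i)" for i
    define U Ou F where "U = u ` I" and "Ou = v ` I"
      and "F = axis_neighbourhood (J * gen_radius + covering_radius + gen_radius * r + 1)"
    define \<mu> where "\<mu> = v \<circ> the_inv_into I u"
    have u: "u i \<in> \<Gamma>" "Re (u i \<i>) > 0" "u i \<notin> F" for i
      unfolding u_def F_def using nearby_sample(1) nearby_sample_side[of 1 i]
        nearby_sample_not_axis_neighbourhood[of 1] by simp_all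
    have v: "v i \<in> \<Gamma>" "Re (v i \<i>) < 0" "v i \<notin> F" for i
      unfolding v_def F_def using nearby_sample(1) nearby_sample_side[of "-1" i]
        nearby_sample_not_axis_neighbourhood[of "-1"] by simp_all
    have inj: "inj_on u I" "inj_on v I"
      using inj_nearby_sample[of 1] inj_nearby_sample[of "-1"] unfolding u_def v_def
      by (auto intro: inj_on_subset)
    have "U \<subseteq> \<Gamma>" "Ou \<subseteq> \<Gamma>" "F \<subseteq> \<Gamma>"
      unfolding U_def Ou_def F_def axis_neighbourhood_def using u(1) v(1) by auto
    moreover have "finite U" "finite Ou" "finite F"
      unfolding U_def Ou_def F_def I_def using card_axis_neighbourhood by simp_all
    moreover have "U \<inter> F = {}" "F \<inter> Ou = {}"
      unfolding U_def Ou_def using u(3) v(3) by blast+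
    moreover have "U \<inter> Ou = {}"
    proof -
      have "u i \<noteq> v i'" for i i'
        using u(2)[of i] v(2)[of i'] by force
      then show ?thesis
        unfolding U_def Ou_def by blast
    qed
    moreover have "U \<noteq> {}"
      unfolding U_def I_def M_def using ball_card_pos by auto
    moreover have "card U = (2 * J + 1) * M"
      unfolding U_def card_image[OF inj(1)] unfolding I_def
      by (simp add: card_cartesian_product nat_add_distrib nat_mult_distrib algebra_simps)
    then have "m * card F \<le> card U"
      unfolding F_def M_def using card_axis_neighbourhood_le[OF J_def] by simp
    moreover have "bij_betw \<mu> U Ou"
      unfolding \<mu>_def U_def Ou_def
      using bij_betw_the_inv_into[OF inj_on_imp_bij_betw[OF inj(1)]] inj_on_imp_bij_betw[OF inj(2)]
      by (rule bij_betw_trans)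
    moreover have "\<forall>x\<in>U. gdist \<Gamma> cayley x (\<mu> x) \<le> enat k"
    proof
      fix x assume "x \<in> U"
      then obtain i where i: "i \<in> I" "x = u i"
        unfolding U_def by auto
      then have "\<mu> x = v i"
        unfolding \<mu>_def using the_inv_into_f_f[OF inj(1) i(1)] by simp
      then show "gdist \<Gamma> cayley x (\<mu> x) \<le> enat k"
        using gdist_nearby_samples[OF k, where i = i] i unfolding u_def v_def I_def by auto
    qed
    moreover have "\<forall>p. walk \<Gamma> cayley p \<and> hd p \<in> U \<and> last p \<in> Ou \<longrightarrow> set p \<inter> F \<noteq> {} \<or> r \<le> length p - 1"
    proof (intro allI impI)
      fix p assume p: "walk \<Gamma> cayley p \<and> hd p \<in> U \<and> last p \<in> Ou"
      obtain i i' where "i \<in> I" "hd p = u i" "last p = v i'"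
        using p unfolding U_def Ou_def by auto
      moreover have "\<bar>fst i\<bar> \<le> J"
        using \<open>i \<in> I\<close> unfolding I_def by auto
      ultimately have "set p \<inter> F = {} \<Longrightarrow> r \<le> length p - 1"
        using long_walk_between_samples[of p i i' J r] p unfolding u_def v_def F_def by simp
      then show "set p \<inter> F \<noteq> {} \<or> r \<le> length p - 1"
        by blast
    qed
    ultimately show "\<exists>U F Ou \<mu>. U \<subseteq> \<Gamma> \<and> F \<subseteq> \<Gamma> \<and> Ou \<subseteq> \<Gamma> \<and> finite U \<and> finite F \<and> finite Ou \<and>
        U \<inter> F = {} \<and> U \<inter> Ou = {} \<and> F \<inter> Ou = {} \<and> U \<noteq> {} \<and> m * card F \<le> card U \<and>
        bij_betw \<mu> U Ou \<and> (\<forall>u\<in>U. gdist \<Gamma> cayley u (\<mu> u) \<le> enat k) \<and>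
        (\<forall>p. walk \<Gamma> cayley p \<and> hd p \<in> U \<and> last p \<in> Ou \<longrightarrow> set p \<inter> F \<noteq> {} \<or> r \<le> length p - 1)"
      by (intro exI[of _ U] exI[of _ F] exI[of _ Ou] exI[of _ \<mu>]) simp
  qed
qed

lemma extraterrestrial_group: "extraterrestrial_group G"
  unfolding extraterrestrial_group_def
  using finite_generators generators_subset inv_generators generate_generators
    extraterrestrial_cayley_graph
  by (intro exI[of _ generators]) simp

end

theorem mainTheorem17:
  fixes \<Gamma> :: "(complex \<Rightarrow> complex) set"
  assumes "fuchsian \<Gamma>" and "cocompact \<Gamma>"
  shows "extraterrestrial_group (psl_group\<lparr>carrier := \<Gamma>\<rparr>)"
proof -
  have "cocompact_fuchsian_group \<Gamma>"
    using assms unfolding fuchsian_def cocompact_fuchsian_group_def cocompact_fuchsian_group_axioms_def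
      fuchsian_group_def by blast
  then interpret cocompact_fuchsian_group \<Gamma> .
  show ?thesis
    by (rule extraterrestrial_group)
qed

end
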